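(* Consider the random triangle removal process on $n$ vertices. Set $\Phi(p,n)=p^{-2/\log n}\log n$, fix $\alpha>0$, and let \[\tau^*_{\mathrm{Y}}=\min\left\{t : \exists\, u,v \text{ such that } |Y_{u,v}-np^2|>\alpha n^{1/2}p\,\Phi\right\}.\] Then with high probability, for all $t$ with $t\le \tau^*_{\mathrm{Y}}$ and $p(t)\ge n^{-1/2}\log^2 n$, \[\left|Q-n^3p^3/6\right|\le \alpha^2 n^2 p\,\Phi^2.\]
   Context: Random triangle removal process: $G(0)=K_n$ on a vertex set $V_G$ with $|V_G|=n$; as long as $G(i)$ contains a triangle, $G(i+1)$ is obtained by deleting the three edges of a uniformly random triangle of $G(i)$. Write $t=t(i)=i/n^2$ and $p=p(i)=1-6i/n^2$; times $t$ range over values $i/n^2$, $i$ an integer. $Q=Q(i)$ is the number of triangles of $G(i)$, and for distinct vertices $u,v$, $Y_{u,v}=|N_u\cap N_v|$ is their co-degree in $G(i)$. "With high probability" means with probability tending to $1$ as $n\to\infty$. *)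

theory Defs
  imports "HOL-Probability.Probability"
begin

text \<open>Graphs on vertex set {..<n} are represented by their edge sets (sets of 2-element sets).\<close>

definition complete_graph :: "nat \<Rightarrow> nat set set" where
  "complete_graph n = {{a, b} | a b. a < n \<and> b < n \<and> a \<noteq> b}"

definition triangles :: "nat set set \<Rightarrow> nat set set" where
  "triangles G = {T. card T = 3 \<and> (\<forall>a\<in>T. \<forall>b\<in>T. a \<noteq> b \<longrightarrow> {a, b} \<in> G)}"

definition remove_triangle :: "nat set set \<Rightarrow> nat set \<Rightarrow> nat set set" where
  "remove_triangle G T = G - {{a, b} | a b. a \<in> T \<and> b \<in> T \<and> a \<noteq> b}"

definition removal_step :: "nat set set \<Rightarrow> nat set set pmf" where
  "removal_step G = map_pmf (remove_triangle G) (pmf_of_set (triangles G))"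

primrec traj :: "nat \<Rightarrow> nat \<Rightarrow> nat set set list pmf" where
  "traj n 0 = return_pmf [complete_graph n]"
| "traj n (Suc k) = bind_pmf (traj n k) (\<lambda>gs.
      if triangles (last gs) = {} then return_pmf gs
      else map_pmf (\<lambda>g. gs @ [g]) (removal_step (last gs)))"

text \<open>The full run of the process: n^2 exceeds the maximal number of steps (at most (n choose 2)/3),
  so the list is the complete trajectory G(0), ..., G(T) with G(T) triangle-free.\<close>
definition triangle_removal_process :: "nat \<Rightarrow> nat set set list pmf" where
  "triangle_removal_process n = traj n (n ^ 2)"

definition num_triangles :: "nat set set \<Rightarrow> nat" where
  "num_triangles G = card (triangles G)"

definition nbrs :: "nat set set \<Rightarrow> nat \<Rightarrow> nat set" where
  "nbrs G u = {w. {u, w} \<in> G}"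

definition codeg :: "nat set set \<Rightarrow> nat \<Rightarrow> nat \<Rightarrow> nat" where
  "codeg G u v = card (nbrs G u \<inter> nbrs G v)"

definition pp :: "nat \<Rightarrow> nat \<Rightarrow> real" where
  "pp n i = 1 - 6 * real i / (real n) ^ 2"

definition Phi :: "real \<Rightarrow> nat \<Rightarrow> real" where
  "Phi p n = p powr (- 2 / ln (real n)) * ln (real n)"

text \<open>The event of the theorem. "i \<le> tau*_Y" means: no co-degree violation at any time j < i.\<close>
definition good_event :: "nat \<Rightarrow> real \<Rightarrow> nat set set list \<Rightarrow> bool" where
  "good_event n \<alpha> gs \<longleftrightarrow>
     (\<forall>i < length gs.
        (pp n i \<ge> real n powr (-1/2) * (ln (real n)) ^ 2 \<and>
         (\<forall>j < i. \<forall>u < n. \<forall>v < n. u \<noteq> v \<longrightarrow>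
            \<bar>real (codeg (gs ! j) u v) - real n * (pp n j)^2\<bar>
              \<le> \<alpha> * sqrt (real n) * pp n j * Phi (pp n j) n))
        \<longrightarrow> \<bar>real (num_triangles (gs ! i)) - (real n)^3 * (pp n i)^3 / 6\<bar>
              \<le> \<alpha>^2 * (real n)^2 * pp n i * (Phi (pp n i) n)^2)"

end

theory Submission
  imports Defs "HOL-Real_Asymp.Real_Asymp"
begin

text \<open>Let \<open>Q\<close> be the number of triangles and \<open>m\<close> the number of edges, and normalise
  \<open>W = Q / (m(m-3)(m-6))\<close>. Removing a triangle \<open>T\<close> deletes three edges and
  \<open>(\<Sum>e\<in>T. Y\<^sub>e) - 2\<close> triangles, where \<open>Y\<^sub>e\<close> counts the triangles on the edge \<open>e\<close>; averaging
  over \<open>T\<close> gives the exact drift \<open>(2 - V/Q) / ((m-3)(m-6)(m-9))\<close> of \<open>W\<close>, where \<open>V\<close> is the sum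
  of squared deviations of the \<open>Y\<^sub>e\<close> from their mean. While the co-degrees are concentrated,
  \<open>V/Q = O(\<alpha>\<^sup>2\<Phi>\<^sup>2)\<close>, so the drifts add up to an error of order \<open>\<alpha>\<^sup>2\<Phi>\<^sup>2/m\<^sup>2\<close>, and the
  centred increments form a martingale whose conditional variance per step is at most
  \<open>144/(\<alpha>\<^sup>2n\<^sup>3)\<close> times the square of its allowance. The squared martingale divided by the
  squared allowance, frozen at \<open>1\<close> once the allowance is exceeded, thus gains at most
  \<open>144/(\<alpha>\<^sup>2n\<^sup>3)\<close> in expectation per step, and after at most \<open>n\<^sup>2\<close> steps Markov's inequality
  bounds the probability of exceeding the allowance by \<open>144/(\<alpha>\<^sup>2n)\<close>. Outside this event
  \<open>Q = m(m-3)(m-6) W\<close> is within \<open>\<alpha>\<^sup>2n\<^sup>2p\<Phi>\<^sup>2\<close> of \<open>n\<^sup>3p\<^sup>3/6\<close>.\<close>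

section \<open>Triangles of graphs on \<open>{..<n}\<close>\<close>

definition graph_on :: "nat \<Rightarrow> nat set set \<Rightarrow> bool" where
  "graph_on n G \<longleftrightarrow> G \<subseteq> complete_graph n"

definition edges_in :: "nat set \<Rightarrow> nat set set" where
  "edges_in T = {e. e \<subseteq> T \<and> card e = 2}"

definition tri_deg :: "nat set set \<Rightarrow> nat set \<Rightarrow> nat" where
  "tri_deg G e = card {S \<in> triangles G. e \<subseteq> S}"

lemma complete_graph_eq: "complete_graph n = {e. e \<subseteq> {..<n} \<and> card e = 2}"
  unfolding complete_graph_def by (auto simp: card_2_iff)

lemma card_complete_graph: "card (complete_graph n) = n choose 2"
  using n_subsets[of "{..<n}" 2] by (simp add: complete_graph_eq conj_commute)

lemma finite_complete_graph: "finite (complete_graph n)"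
proof -
  have "complete_graph n \<subseteq> Pow {..<n}" by (auto simp: complete_graph_eq)
  then show ?thesis by (rule finite_subset) auto
qed

lemma graph_on_complete_graph: "graph_on n (complete_graph n)"
  by (simp add: graph_on_def)

lemma graph_on_finite: "graph_on n G \<Longrightarrow> finite G"
  unfolding graph_on_def using finite_complete_graph finite_subset by blast

lemma graph_on_edge: "graph_on n G \<Longrightarrow> e \<in> G \<Longrightarrow> e \<subseteq> {..<n} \<and> card e = 2"
  unfolding graph_on_def complete_graph_eq by auto

lemma graph_on_no_loop: "graph_on n G \<Longrightarrow> {a} \<notin> G"
  using graph_on_edge by fastforce

lemma graph_on_card_le: "graph_on n G \<Longrightarrow> card G \<le> n choose 2"
  unfolding graph_on_def using finite_complete_graph card_complete_graph by (metis card_mono)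

lemma graph_on_remove_triangle: "graph_on n G \<Longrightarrow> graph_on n (remove_triangle G T)"
  unfolding graph_on_def remove_triangle_def by auto

lemma triangleE:
  assumes "T \<in> triangles G"
  obtains a b c where "T = {a,b,c}" "a \<noteq> b" "b \<noteq> c" "a \<noteq> c"
    "{a,b} \<in> G" "{a,c} \<in> G" "{b,c} \<in> G"
proof -
  from assms have c: "card T = 3" and e: "\<forall>a\<in>T. \<forall>b\<in>T. a \<noteq> b \<longrightarrow> {a, b} \<in> G"
    by (auto simp: triangles_def)
  from c obtain x y z where "T = {x,y,z}" "x \<noteq> y" "y \<noteq> z" "x \<noteq> z" by (auto simp: card_3_iff)
  with e show ?thesis using that by auto
qed

lemma triangles_subset: "graph_on n G \<Longrightarrow> triangles G \<subseteq> {T. T \<subseteq> {..<n} \<and> card T = 3}"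
proof
  fix T assume G: "graph_on n G" and T: "T \<in> triangles G"
  then obtain a b c where "T = {a,b,c}" "{a,b} \<in> G" "{a,c} \<in> G"
    by (elim triangleE)
  then have "T \<subseteq> {..<n}" using graph_on_edge[OF G] by auto
  then show "T \<in> {T. T \<subseteq> {..<n} \<and> card T = 3}" using T by (simp add: triangles_def)
qed

lemma finite_triangles: "graph_on n G \<Longrightarrow> finite (triangles G)"
  by (rule finite_subset[OF triangles_subset]) auto

lemma triangles_complete_graph: "triangles (complete_graph n) = {T. T \<subseteq> {..<n} \<and> card T = 3}"
proof
  show "triangles (complete_graph n) \<subseteq> {T. T \<subseteq> {..<n} \<and> card T = 3}"
    by (rule triangles_subset[OF graph_on_complete_graph])
  show "{T. T \<subseteq> {..<n} \<and> card T = 3} \<subseteq> triangles (complete_graph n)"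
    by (auto simp: triangles_def complete_graph_def)
qed

lemma num_triangles_complete_graph: "num_triangles (complete_graph n) = n choose 3"
  unfolding num_triangles_def triangles_complete_graph
  using n_subsets[of "{..<n}" 3] by (simp add: conj_commute)

lemma remove_triangle_eq: "remove_triangle G T = G - edges_in T"
  unfolding remove_triangle_def edges_in_def by (auto simp: card_2_iff)

lemma edges_in_triple:
  "a \<noteq> b \<Longrightarrow> b \<noteq> c \<Longrightarrow> a \<noteq> c \<Longrightarrow> edges_in {a,b,c} = {{a,b},{a,c},{b,c}}"
  unfolding edges_in_def by (auto simp: card_2_iff doubleton_eq_iff)

lemma card_edges_in_triangle: "T \<in> triangles G \<Longrightarrow> card (edges_in T) = 3"
  by (erule triangleE) (auto simp: edges_in_triple card_insert_if doubleton_eq_iff)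

lemma edges_in_triangle_subset: "T \<in> triangles G \<Longrightarrow> edges_in T \<subseteq> G"
  by (erule triangleE) (auto simp: edges_in_triple)

lemma card_remove_triangle:
  assumes "graph_on n G" "T \<in> triangles G"
  shows "card (remove_triangle G T) + 3 = card G"
proof -
  have f: "finite G" using graph_on_finite[OF assms(1)] .
  have s: "edges_in T \<subseteq> G" using edges_in_triangle_subset[OF assms(2)] .
  then have "card (edges_in T) \<le> card G" using f by (rule card_mono[rotated])
  moreover have "card (G - edges_in T) = card G - card (edges_in T)"
    using s f finite_subset by (blast intro: card_Diff_subset)
  ultimately show ?thesis using card_edges_in_triangle[OF assms(2)] by (simp add: remove_triangle_eq)
qed

lemma triangles_through_edge:
  assumes G: "graph_on n G" and uv: "{u,v} \<in> G" "u \<noteq> v"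
  shows "{S \<in> triangles G. {u,v} \<subseteq> S} = (\<lambda>w. {u,v,w}) ` (nbrs G u \<inter> nbrs G v)"
proof (intro set_eqI iffI)
  fix S assume "S \<in> {S \<in> triangles G. {u,v} \<subseteq> S}"
  then have S: "S \<in> triangles G" and sub: "{u,v} \<subseteq> S" by auto
  then have c: "card S = 3" and e: "\<forall>a\<in>S. \<forall>b\<in>S. a \<noteq> b \<longrightarrow> {a, b} \<in> G"
    by (auto simp: triangles_def)
  then have fS: "finite S" by (metis card.infinite zero_neq_numeral)
  have "card {u,v} = 2" using uv(2) by simp
  then have "\<not> S \<subseteq> {u,v}" using card_mono[of "{u,v}" S] c by auto
  then obtain w where wS: "w \<in> S" and wn: "w \<notin> {u,v}" by auto
  have "{u,v,w} = S"
    using sub wS wn uv(2) c fS by (intro card_subset_eq) auto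
  moreover have "w \<in> nbrs G u \<inter> nbrs G v"
    using e wS wn sub unfolding nbrs_def by (auto simp: insert_commute)
  ultimately show "S \<in> (\<lambda>w. {u,v,w}) ` (nbrs G u \<inter> nbrs G v)" by auto
next
  fix S assume "S \<in> (\<lambda>w. {u,v,w}) ` (nbrs G u \<inter> nbrs G v)"
  then obtain w where S: "S = {u,v,w}" and wu: "{u,w} \<in> G" and wv: "{v,w} \<in> G"
    by (auto simp: nbrs_def)
  have "w \<noteq> u" "w \<noteq> v" using wu wv graph_on_no_loop[OF G] by auto
  then have "card S = 3" using S uv by auto
  moreover have "\<forall>a\<in>S. \<forall>b\<in>S. a \<noteq> b \<longrightarrow> {a, b} \<in> G"
    using S uv wu wv by (auto simp: insert_commute)
  ultimately show "S \<in> {S \<in> triangles G. {u,v} \<subseteq> S}" using S by (auto simp: triangles_def)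
qed

lemma tri_deg_eq_codeg:
  assumes G: "graph_on n G" and uv: "{u,v} \<in> G" "u \<noteq> v"
  shows "tri_deg G {u,v} = codeg G u v"
proof -
  have "inj_on (\<lambda>w. {u,v,w}) (nbrs G u \<inter> nbrs G v)"
  proof (rule inj_onI)
    fix x y assume "x \<in> nbrs G u \<inter> nbrs G v" "y \<in> nbrs G u \<inter> nbrs G v" "{u,v,x} = {u,v,y}"
    moreover have "x \<notin> {u,v}" "y \<notin> {u,v}"
      using calculation(1,2) graph_on_no_loop[OF G] by (auto simp: nbrs_def)
    ultimately show "x = y" by auto
  qed
  then show ?thesis
    unfolding tri_deg_def codeg_def triangles_through_edge[OF assms] by (simp add: card_image)
qed

lemma triangles_remove_triangle:
  "triangles (remove_triangle G T) = {S \<in> triangles G. \<not> (\<exists>e\<in>edges_in T. e \<subseteq> S)}"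
proof (intro set_eqI iffI)
  fix S assume S: "S \<in> triangles (remove_triangle G T)"
  have "\<not> e \<subseteq> S" if e: "e \<in> edges_in T" for e
  proof
    assume "e \<subseteq> S"
    moreover obtain a b where "e = {a,b}" "a \<noteq> b" using e by (auto simp: edges_in_def card_2_iff)
    ultimately show False using S e by (auto simp: triangles_def remove_triangle_eq)
  qed
  then show "S \<in> {S \<in> triangles G. \<not> (\<exists>e\<in>edges_in T. e \<subseteq> S)}"
    using S by (auto simp: triangles_def remove_triangle_eq)
next
  fix S assume "S \<in> {S \<in> triangles G. \<not> (\<exists>e\<in>edges_in T. e \<subseteq> S)}"
  then have "card S = 3" "\<forall>a\<in>S. \<forall>b\<in>S. a \<noteq> b \<longrightarrow> {a, b} \<in> G"
    and "\<forall>a\<in>S. \<forall>b\<in>S. a \<noteq> b \<longrightarrow> {a,b} \<notin> edges_in T" by (auto simp: triangles_def)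
  then show "S \<in> triangles (remove_triangle G T)"
    unfolding triangles_def remove_triangle_eq by blast
qed

text \<open>Inclusion-exclusion: a triangle other than \<open>T\<close> shares at most one edge with \<open>T\<close>, while
  \<open>T\<close> itself is counted three times.\<close>
lemma card_triangles_hit:
  assumes G: "graph_on n G" and T: "T \<in> triangles G"
  shows "card {S \<in> triangles G. \<exists>e\<in>edges_in T. e \<subseteq> S} + 2 = (\<Sum>e\<in>edges_in T. tri_deg G e)"
proof -
  obtain a b c where abc: "T = {a,b,c}" "a \<noteq> b" "b \<noteq> c" "a \<noteq> c"
    using T by (elim triangleE)
  define A where "A e = {S \<in> triangles G. e \<subseteq> S}" for e
  have fin: "finite (A e)" for e using finite_triangles[OF G] by (auto simp: A_def)
  have T_in: "T \<in> A e" if "e \<subseteq> T" for e using T that by (auto simp: A_def)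
  have only_T: "S = T" if "S \<in> triangles G" "T \<subseteq> S" for S
  proof -
    have "card S = 3" "card T = 3" using that T by (auto simp: triangles_def)
    then show ?thesis using that card_subset_eq
      by (metis card.infinite less_numeral_extra(3) zero_less_numeral)
  qed
  have i1: "A {a,b} \<inter> A {a,c} = {T}" using T_in only_T abc by (auto simp: A_def)
  have i2: "(A {a,b} \<union> A {a,c}) \<inter> A {b,c} = {T}" using T_in only_T abc by (auto simp: A_def)
  have "{S \<in> triangles G. \<exists>e\<in>edges_in T. e \<subseteq> S} = (A {a,b} \<union> A {a,c}) \<union> A {b,c}"
    using abc by (auto simp: A_def edges_in_triple)
  moreover have "card (A {a,b} \<union> A {a,c}) + 1 = card (A {a,b}) + card (A {a,c})"
    using card_Un_Int[OF fin fin, of "{a,b}" "{a,c}"] i1 by simp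
  moreover have "card ((A {a,b} \<union> A {a,c}) \<union> A {b,c}) + 1 = card (A {a,b} \<union> A {a,c}) + card (A {b,c})"
    using card_Un_Int[of "A {a,b} \<union> A {a,c}" "A {b,c}"] fin i2 by simp
  moreover have "(\<Sum>e\<in>edges_in T. tri_deg G e) = card (A {a,b}) + card (A {a,c}) + card (A {b,c})"
    using abc by (simp add: edges_in_triple tri_deg_def A_def doubleton_eq_iff)
  ultimately show ?thesis by simp
qed

lemma num_triangles_remove_triangle:
  assumes "graph_on n G" "T \<in> triangles G"
  shows "num_triangles (remove_triangle G T) + (\<Sum>e\<in>edges_in T. tri_deg G e) = num_triangles G + 2"
proof -
  let ?H = "{S \<in> triangles G. \<exists>e\<in>edges_in T. e \<subseteq> S}"
  have "triangles G = triangles (remove_triangle G T) \<union> ?H"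
    "triangles (remove_triangle G T) \<inter> ?H = {}"
    by (auto simp: triangles_remove_triangle)
  then have "card (triangles G) = card (triangles (remove_triangle G T)) + card ?H"
    using finite_triangles[OF assms(1)] by (metis card_Un_disjoint finite_Un)
  then show ?thesis using card_triangles_hit[OF assms] by (simp add: num_triangles_def)
qed

lemma sum_triangles_edges_in:
  assumes "graph_on n G"
  shows "(\<Sum>T\<in>triangles G. \<Sum>e\<in>edges_in T. h e) = (\<Sum>e\<in>G. h e * real (tri_deg G e))"
proof -
  have "(\<Sum>T\<in>triangles G. \<Sum>e\<in>edges_in T. h e) = (\<Sum>T\<in>triangles G. \<Sum>e\<in>G. if e \<subseteq> T then h e else 0)"
  proof (rule sum.cong[OF refl])
    fix T assume T: "T \<in> triangles G"
    have "edges_in T = {e \<in> G. e \<subseteq> T}"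
      using edges_in_triangle_subset[OF T] graph_on_edge[OF assms] by (auto simp: edges_in_def)
    then show "(\<Sum>e\<in>edges_in T. h e) = (\<Sum>e\<in>G. if e \<subseteq> T then h e else 0)"
      using graph_on_finite[OF assms] by (simp add: sum.inter_filter)
  qed
  also have "\<dots> = (\<Sum>e\<in>G. \<Sum>T\<in>triangles G. if e \<subseteq> T then h e else 0)"
    by (rule sum.swap)
  also have "\<dots> = (\<Sum>e\<in>G. h e * real (tri_deg G e))"
    using finite_triangles[OF assms] by (simp add: sum.inter_filter[symmetric] tri_deg_def mult.commute)
  finally show ?thesis .
qed

lemma sum_tri_deg:
  assumes "graph_on n G"
  shows "(\<Sum>e\<in>G. real (tri_deg G e)) = 3 * real (num_triangles G)"
proof -
  have "(\<Sum>e\<in>G. 1 * real (tri_deg G e)) = (\<Sum>T\<in>triangles G. \<Sum>e\<in>edges_in T. (1::real))"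
    by (rule sum_triangles_edges_in[OF assms, symmetric])
  also have "\<dots> = (\<Sum>T\<in>triangles G. 3)" by (intro sum.cong) (auto simp: card_edges_in_triangle)
  finally show ?thesis by (simp add: num_triangles_def)
qed

lemma sum_triangles_tri_deg:
  assumes "graph_on n G"
  shows "(\<Sum>T\<in>triangles G. \<Sum>e\<in>edges_in T. real (tri_deg G e)) = (\<Sum>e\<in>G. (real (tri_deg G e))^2)"
  using sum_triangles_edges_in[OF assms, of "\<lambda>e. real (tri_deg G e)"] by (simp add: power2_eq_square)

lemma abs_add3_diff_le:
  fixes a b c d :: real
  shows "\<bar>a + b + c - d\<bar> \<le> \<bar>a - d\<bar> + \<bar>b\<bar> + \<bar>c\<bar>"
  by linarith

lemma sum_sq_dev_eq:
  fixes h :: "'a \<Rightarrow> real"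
  assumes "finite A" "A \<noteq> {}"
  defines "\<mu> \<equiv> (\<Sum>x\<in>A. h x) / real (card A)"
  shows "(\<Sum>x\<in>A. (h x - c)^2) = (\<Sum>x\<in>A. (h x - \<mu>)^2) + real (card A) * (\<mu> - c)^2"
proof -
  have z: "(\<Sum>x\<in>A. (h x - \<mu>)) = 0"
    using assms by (simp add: sum_subtractf \<mu>_def)
  have "(\<Sum>x\<in>A. (h x - c)^2) = (\<Sum>x\<in>A. (h x - \<mu>)^2 + 2 * (\<mu> - c) * (h x - \<mu>) + (\<mu> - c)^2)"
    by (intro sum.cong) (auto simp: power2_eq_square algebra_simps)
  also have "\<dots> = (\<Sum>x\<in>A. (h x - \<mu>)^2) + 2 * (\<mu> - c) * (\<Sum>x\<in>A. (h x - \<mu>)) + real (card A) * (\<mu> - c)^2"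
    by (simp add: sum.distrib sum_distrib_left)
  finally show ?thesis using z by simp
qed

lemma sum_sq_dev_mean_le:
  fixes h :: "'a \<Rightarrow> real"
  assumes "finite A" "A \<noteq> {}"
  shows "(\<Sum>x\<in>A. (h x - (\<Sum>y\<in>A. h y) / real (card A))^2) \<le> (\<Sum>x\<in>A. (h x - c)^2)"
  using sum_sq_dev_eq[OF assms, of h c] by simp

lemma sum_sq_dev_mean_eq:
  fixes h :: "'a \<Rightarrow> real"
  assumes "finite A" "A \<noteq> {}"
  shows "(\<Sum>x\<in>A. (h x - (\<Sum>y\<in>A. h y) / real (card A))^2) =
     (\<Sum>x\<in>A. (h x)^2) - (\<Sum>y\<in>A. h y)^2 / real (card A)"
  using sum_sq_dev_eq[OF assms, of h 0] assms by (simp add: power2_eq_square field_simps)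

lemma real_choose_two: "real (n choose 2) * 2 = real n * (real n - 1)"
proof (induction n)
  case (Suc n)
  have "Suc n choose 2 = n + (n choose 2)"
    by (metis Suc_1 binomial_Suc_Suc choose_one)
  then show ?case using Suc by (simp add: algebra_simps)
qed simp

lemma real_choose_three: "real (n choose 3) * 6 = real n * (real n - 1) * (real n - 2)"
proof (induction n)
  case (Suc n)
  have "Suc n choose 3 = (n choose 2) + (n choose 3)"
    using binomial_Suc_Suc[of n 2] by (simp add: numeral_3_eq_3)
  then show ?case using Suc real_choose_two[of n] by (simp add: algebra_simps)
qed simp

definition tri_scale :: "real \<Rightarrow> real" where
  "tri_scale m = m * (m - 3) * (m - 6)"

lemma tri_scale_pos: "6 < m \<Longrightarrow> 0 < tri_scale m"
  unfolding tri_scale_def by simp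

lemma tri_scale_le_double: "30 \<le> m - 3 \<Longrightarrow> tri_scale m \<le> 2 * tri_scale (m - 3)"
proof -
  assume m: "30 \<le> m - 3"
  then have "m * ((m - 3) * (m - 6)) \<le> (2 * (m - 9)) * ((m - 3) * (m - 6))"
    by (intro mult_right_mono) auto
  then show ?thesis unfolding tri_scale_def by (simp add: algebra_simps)
qed

lemma tri_scale_quotient_antimono:
  assumes "30 \<le> m" "m \<le> m'" "0 \<le> (k::real)"
  shows "(2 * m' + k) / tri_scale m' \<le> (2 * m + k) / tri_scale m"
proof -
  have pos: "0 < tri_scale m" "0 < tri_scale m'" using tri_scale_pos assms by auto
  have a: "(2 * m' + k) * m \<le> (2 * m + k) * m'" using assms by (simp add: algebra_simps mult_left_mono)
  have b: "(m - 3) * (m - 6) \<le> (m' - 3) * (m' - 6)" using assms by (intro mult_mono) auto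
  have "(2 * m' + k) * tri_scale m = ((2 * m' + k) * m) * ((m - 3) * (m - 6))"
    by (simp add: tri_scale_def algebra_simps)
  also have "\<dots> \<le> ((2 * m + k) * m') * ((m - 3) * (m - 6))"
    using a assms by (intro mult_right_mono) auto
  also have "\<dots> \<le> ((2 * m + k) * m') * ((m' - 3) * (m' - 6))"
    using b assms by (intro mult_left_mono) auto
  also have "\<dots> = (2 * m + k) * tri_scale m'" by (simp add: tri_scale_def algebra_simps)
  finally show ?thesis using pos by (simp add: divide_simps)
qed

text \<open>The sum telescopes because \<open>6 / tri_scale x = 1/((x-3)(x-6)) - 1/(x(x-3))\<close>.\<close>
lemma tri_scale_inverse_sum_le:
  fixes N :: real
  assumes "30 \<le> N - 3 * real i"
  shows "tri_scale (N - 3 * real i) * (\<Sum>j<i. 1 / tri_scale (N - 3 * (real j + 1))) \<le> (N - 3 * real i) / 6"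
proof -
  define a where "a j = 1 / ((N - 3 * real j - 3) * (N - 3 * real j - 6))" for j :: nat
  have "1 / tri_scale (N - 3 * (real j + 1)) = (a (Suc j) - a j) / 6" if "j < i" for j
  proof -
    define x where "x = N - 3 * (real j + 1)"
    have "30 \<le> x" unfolding x_def using assms that by simp
    then have "x \<noteq> 0" "x - 3 \<noteq> 0" "x - 6 \<noteq> 0" by auto
    then have "1 / ((x - 3) * (x - 6)) - 1 / (x * (x - 3)) = 6 / tri_scale x"
      unfolding tri_scale_def by (simp add: divide_simps)
    moreover have "a (Suc j) = 1 / ((x - 3) * (x - 6))" "a j = 1 / (x * (x - 3))"
      unfolding a_def x_def by (simp_all add: algebra_simps)
    ultimately show ?thesis unfolding x_def by simp
  qed
  then have "(\<Sum>j<i. 1 / tri_scale (N - 3 * (real j + 1))) = (\<Sum>j<i. (a (Suc j) - a j) / 6)"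
    by (intro sum.cong) auto
  also have "\<dots> = (a i - a 0) / 6"
    by (simp add: sum_divide_distrib[symmetric] sum_lessThan_telescope)
  also have "\<dots> \<le> a i / 6"
    using assms by (simp add: a_def)
  finally have S: "(\<Sum>j<i. 1 / tri_scale (N - 3 * (real j + 1))) \<le> a i / 6" .
  have "tri_scale (N - 3 * real i) * (\<Sum>j<i. 1 / tri_scale (N - 3 * (real j + 1)))
      \<le> tri_scale (N - 3 * real i) * (a i / 6)"
    using S tri_scale_pos[of "N - 3 * real i"] assms by (intro mult_left_mono) auto
  also have "\<dots> = (N - 3 * real i) / 6"
  proof -
    define z where "z = (N - 3 * real i - 3) * (N - 3 * real i - 6)"
    have "z \<noteq> 0" using assms z_def by simp
    moreover have "tri_scale (N - 3 * real i) = (N - 3 * real i) * z" "a i = 1 / z"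
      unfolding tri_scale_def z_def a_def by (simp_all add: mult.assoc)
    ultimately show ?thesis by simp
  qed
  finally show ?thesis .
qed

lemma edge_ratio_bounds:
  fixes n x s :: real
  assumes "12 \<le> n" "2 \<le> x" "x \<le> n" "0 \<le> s" "s \<le> 6"
  shows "(x - 2) / n \<le> ((n*x - n)/2 - s) / (n*(n-1)/2 - s)"
    and "((n*x - n)/2 - s) / (n*(n-1)/2 - s) \<le> x / n"
proof -
  have "n * 11 \<le> n * (n - 1)" using assms by (intro mult_left_mono) auto
  then have N: "0 < n*(n-1)/2 - s" using assms by linarith
  have n0: "0 < n" using assms by simp
  have "x * (n*(n-1)/2 - s) - n * ((n*x - n)/2 - s) = (n - x) * (n/2 + s)"
    by (simp add: field_simps)
  moreover have "(n - x) * (n/2 + s) \<ge> 0" using assms by simp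
  ultimately show "((n*x - n)/2 - s) / (n*(n-1)/2 - s) \<le> x / n"
    using N n0 by (simp add: field_simps)
  have "n * ((n*x - n)/2 - s) - (x - 2) * (n*(n-1)/2 - s)
      = n * (n - 2 * s) / 2 + n * (x - 2) / 2 + s * (x - 2)"
    by (simp add: field_simps)
  moreover have "0 \<le> n * (n - 2 * s) / 2 + n * (x - 2) / 2 + s * (x - 2)" using assms by simp
  ultimately show "(x - 2) / n \<le> ((n*x - n)/2 - s) / (n*(n-1)/2 - s)"
    using N n0 by (simp add: field_simps)
qed

lemma prod3_between:
  fixes a b c lo hi :: real
  assumes "0 \<le> lo" "lo \<le> a" "a \<le> hi" "lo \<le> b" "b \<le> hi" "lo \<le> c" "c \<le> hi"
  shows "lo^3 \<le> a * b * c" and "a * b * c \<le> hi^3"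
proof -
  have "lo * lo * lo \<le> a * b * c" using assms by (intro mult_mono) auto
  then show "lo^3 \<le> a * b * c" by (simp add: power3_eq_cube)
  have "a * b * c \<le> hi * hi * hi" using assms by (intro mult_mono) auto
  then show "a * b * c \<le> hi^3" by (simp add: power3_eq_cube)
qed

lemma tri_scale_quotient_bounds:
  fixes n x :: real
  assumes "12 \<le> n" "2 \<le> x" "x \<le> n"
  shows "((x - 2) / n)^3 \<le> tri_scale ((n*x - n)/2) / tri_scale (n*(n-1)/2)"
    and "tri_scale ((n*x - n)/2) / tri_scale (n*(n-1)/2) \<le> (x / n)^3"
proof -
  define r where "r s = ((n*x - n)/2 - s) / (n*(n-1)/2 - s)" for s
  have "n * 11 \<le> n * (n - 1)" using assms by (intro mult_left_mono) auto
  then have "tri_scale ((n*x - n)/2) / tri_scale (n*(n-1)/2) = r 0 * r 3 * r 6"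
    unfolding tri_scale_def r_def using assms by (simp add: field_simps)
  moreover have "0 \<le> (x - 2) / n" using assms by simp
  moreover have "(x - 2) / n \<le> r s" "r s \<le> x / n" if "0 \<le> s" "s \<le> 6" for s
    using edge_ratio_bounds[OF assms that] unfolding r_def by auto
  ultimately show "((x - 2) / n)^3 \<le> tri_scale ((n*x - n)/2) / tri_scale (n*(n-1)/2)"
    and "tri_scale ((n*x - n)/2) / tri_scale (n*(n-1)/2) \<le> (x / n)^3"
    using prod3_between[of "(x - 2) / n" "r 0" "x / n" "r 3" "r 6"] by auto
qed

text \<open>The prediction for the triangle count at density \<open>x/n\<close> obtained by rescaling the count
  of \<open>K\<^sub>n\<close> with \<open>tri_scale\<close> is \<open>x\<^sup>3/6 + O(n x)\<close>.\<close>
lemma tri_scale_initial_error: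
  fixes n x :: real
  assumes "12 \<le> n" "2 \<le> x" "x \<le> n"
  shows "\<bar>tri_scale ((n*x - n)/2) * (n*(n-1)*(n-2)/6) / tri_scale (n*(n-1)/2) - x^3/6\<bar> \<le> 3/2 * n * x"
proof -
  define q where "q = tri_scale ((n*x - n)/2) / tri_scale (n*(n-1)/2)"
  define C where "C = n*(n-1)*(n-2)/6"
  have n0: "0 < n" using assms by simp
  have lo0: "0 \<le> (x - 2) / n" using assms by simp
  have qb: "((x - 2) / n)^3 \<le> q" "q \<le> (x / n)^3"
    using tri_scale_quotient_bounds[OF assms] unfolding q_def by auto
  have Cu: "C \<le> n^3/6" and Cl: "n^3/6 - n^2/2 \<le> C"
    unfolding C_def using assms by (simp_all add: algebra_simps power3_eq_cube power2_eq_square)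
  have C0: "0 \<le> n^3/6 - n^2/2"
  proof -
    have "n^2 * 3 \<le> n^2 * n" using assms by (intro mult_left_mono) auto
    then show ?thesis by (simp add: power3_eq_cube power2_eq_square algebra_simps)
  qed
  have up: "C * q \<le> x^3/6"
  proof -
    have "C * q \<le> (n^3/6) * (x/n)^3"
      using Cu qb C0 Cl lo0 n0 by (intro mult_mono) (auto intro: order_trans[OF zero_le_power[OF lo0]])
    also have "\<dots> = x^3/6" using n0 by (simp add: power_divide)
    finally show ?thesis .
  qed
  have "(n^3/6 - n^2/2) * ((x - 2) / n)^3 \<le> C * q"
    using Cl qb C0 lo0 by (intro mult_mono) auto
  moreover have "(n^3/6 - n^2/2) * ((x - 2) / n)^3 = (x-2)^3/6 - (x-2)^3/(2*n)"
    using n0 by (simp add: power_divide field_simps power3_eq_cube power2_eq_square)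
  moreover have "x^3 - (x-2)^3 = 6 * x^2 - 12 * x + 8"
    by (simp add: power3_eq_cube power2_eq_square algebra_simps)
  moreover have "(x-2)^3/(2*n) \<le> x^3/(2*n)"
    using assms n0 by (intro divide_right_mono power_mono) auto
  moreover have "x^2 \<le> n * x" using assms by (simp add: power2_eq_square mult_right_mono)
  moreover have "x^3 / n \<le> n * x"
  proof -
    have "x^3 \<le> n * n * x" using assms by (simp add: power3_eq_cube mult_mono mult_right_mono)
    then show ?thesis using n0 by (simp add: divide_simps mult.commute mult.left_commute)
  qed
  moreover have "x^3/(2*n) = (x^3/n)/2" by simp
  ultimately have lo: "x^3/6 - C * q \<le> 3/2 * n * x" using assms by linarith
  have "tri_scale ((n*x - n)/2) * (n*(n-1)*(n-2)/6) / tri_scale (n*(n-1)/2) = C * q"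
    unfolding q_def C_def by simp
  moreover have "0 \<le> n * x" using assms by simp
  ultimately show ?thesis using up lo unfolding abs_le_iff by linarith
qed

definition p_min :: "nat \<Rightarrow> real" where
  "p_min n = real n powr (-1/2) * (ln (real n))^2"

definition large_enough :: "nat \<Rightarrow> real \<Rightarrow> bool" where
  "large_enough n \<alpha> \<longleftrightarrow> 100 \<le> real n \<and> 1 \<le> ln (real n) \<and> 12 \<le> \<alpha>^2 * (ln (real n))^2
     \<and> 4 * \<alpha> * exp 1 \<le> ln (real n) \<and> p_min n \<le> 1"

text \<open>Half the admissible error in the number of triangles, measured in units of \<open>tri_scale\<close>
  of the edge count \<open>(n\<^sup>2p - n)/2\<close> belonging to density \<open>p\<close>.\<close>
definition mart_bound :: "nat \<Rightarrow> real \<Rightarrow> real \<Rightarrow> real" where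
  "mart_bound n \<alpha> p = \<alpha>^2 * (real n)^2 * p * (Phi p n)^2 / (2 * tri_scale (((real n)^2 * p - real n) / 2))"

definition codeg_err :: "nat \<Rightarrow> real \<Rightarrow> real \<Rightarrow> real" where
  "codeg_err n \<alpha> p = \<alpha> * sqrt (real n) * p * Phi p n"

lemma large_enoughD:
  assumes "large_enough n \<alpha>"
  shows "100 \<le> real n" "1 \<le> ln (real n)" "12 \<le> \<alpha>^2 * (ln (real n))^2"
    "4 * \<alpha> * exp 1 \<le> ln (real n)" "p_min n \<le> 1"
  using assms by (auto simp: large_enough_def)

lemma eventually_large_enough:
  assumes "\<alpha> > 0"
  shows "eventually (\<lambda>n. large_enough n \<alpha>) sequentially"
proof -
  have "eventually (\<lambda>n::nat. 100 \<le> real n) sequentially"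
    "eventually (\<lambda>n::nat. 1 \<le> ln (real n)) sequentially"
    "eventually (\<lambda>n::nat. 4 / \<alpha> \<le> ln (real n)) sequentially"
    "eventually (\<lambda>n::nat. 4 * \<alpha> * exp 1 \<le> ln (real n)) sequentially"
    "eventually (\<lambda>n::nat. real n powr (-1/2) * (ln (real n))^2 \<le> 1) sequentially"
    by real_asymp+
  then show ?thesis
  proof eventually_elim
    case (elim n)
    have "4 \<le> \<alpha> * ln (real n)" using elim(3) assms by (simp add: divide_le_eq mult.commute)
    then have "4^2 \<le> (\<alpha> * ln (real n))^2" by (intro power_mono) auto
    then have "12 \<le> \<alpha>^2 * (ln (real n))^2" by (simp add: power_mult_distrib)
    then show ?case using elim unfolding large_enough_def p_min_def by simp
  qed
qed

lemma p_min_ge: "large_enough n \<alpha> \<Longrightarrow> real n powr (-1/2) \<le> p_min n"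
  unfolding p_min_def using large_enoughD(2)
  by (metis mult_left_mono mult.right_neutral powr_ge_zero one_le_power)

lemma p_min_pos: "large_enough n \<alpha> \<Longrightarrow> 0 < p_min n"
  using p_min_ge large_enoughD(1) by (smt (verit) powr_gt_zero of_nat_0_less_iff)

lemma Phi_antimono:
  assumes "0 < p" "p \<le> q" "1 < real n"
  shows "Phi q n \<le> Phi p n"
proof -
  have L: "0 < ln (real n)" using assms by simp
  have "q powr (- 2 / ln (real n)) \<le> p powr (- 2 / ln (real n))"
    by (rule powr_mono2') (use assms L in \<open>auto simp: divide_nonpos_pos\<close>)
  then show ?thesis unfolding Phi_def using L by (simp add: mult_right_mono)
qed

lemma Phi_le_exp_ln:
  assumes n: "1 < real n" and p: "real n powr (-1/2) \<le> p"
  shows "Phi p n \<le> exp 1 * ln (real n)"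
proof -
  have L: "0 < ln (real n)" using n by simp
  have "p powr (- 2 / ln (real n)) \<le> (real n powr (-1/2)) powr (- 2 / ln (real n))"
    by (rule powr_mono2') (use p n L in \<open>auto simp: divide_nonpos_pos\<close>)
  also have "\<dots> = exp 1" using n L by (simp add: powr_powr powr_def)
  finally show ?thesis unfolding Phi_def using L by (simp add: mult_right_mono)
qed

lemma Phi_bounds:
  assumes "large_enough n \<alpha>" "p_min n \<le> p" "p \<le> 1"
  shows "ln (real n) \<le> Phi p n" "Phi p n \<le> exp 1 * ln (real n)" "0 < Phi p n"
proof -
  have n: "1 < real n" using large_enoughD(1)[OF assms(1)] by simp
  have p: "0 < p" using p_min_pos[OF assms(1)] assms by simp
  show "ln (real n) \<le> Phi p n" using Phi_antimono[OF p assms(3) n] by (simp add: Phi_def)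
  show "Phi p n \<le> exp 1 * ln (real n)" using Phi_le_exp_ln[OF n] p_min_ge[OF assms(1)] assms(2) by simp
  show "0 < Phi p n" using p n by (simp add: Phi_def)
qed

lemma twelve_le_alpha_sq_Phi_sq:
  assumes "large_enough n \<alpha>" "p_min n \<le> p" "p \<le> 1"
  shows "12 \<le> \<alpha>^2 * (Phi p n)^2"
proof -
  have "\<alpha>^2 * (ln (real n))^2 \<le> \<alpha>^2 * (Phi p n)^2"
    using Phi_bounds(1)[OF assms] large_enoughD(2)[OF assms(1)] by (intro mult_left_mono power_mono) auto
  then show ?thesis using large_enoughD(3)[OF assms(1)] by simp
qed

lemma ln_sq_le_sqrt_mult:
  assumes "large_enough n \<alpha>" "p_min n \<le> p"
  shows "(ln (real n))^2 \<le> sqrt (real n) * p"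
proof -
  have n: "real n > 0" using large_enoughD(1)[OF assms(1)] by simp
  then have "sqrt (real n) * p_min n = (ln (real n))^2"
    by (simp add: p_min_def powr_minus_divide powr_half_sqrt[symmetric])
  moreover have "sqrt (real n) * p_min n \<le> sqrt (real n) * p"
    using assms(2) by (intro mult_left_mono) auto
  ultimately show ?thesis by simp
qed

lemma four_alpha_Phi_le:
  assumes "large_enough n \<alpha>" "\<alpha> > 0" "p_min n \<le> p" "p \<le> 1"
  shows "4 * \<alpha> * Phi p n \<le> sqrt (real n) * p"
proof -
  have "4 * \<alpha> * Phi p n \<le> (4 * \<alpha> * exp 1) * ln (real n)"
    using Phi_bounds(2)[OF assms(1,3,4)] assms(2) by simp
  also have "\<dots> \<le> ln (real n) * ln (real n)"
    using large_enoughD[OF assms(1)] by (intro mult_right_mono) auto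
  also have "\<dots> \<le> sqrt (real n) * p"
    using ln_sq_le_sqrt_mult[OF assms(1,3)] by (simp add: power2_eq_square)
  finally show ?thesis .
qed

lemma n_mult_p_ge:
  assumes "large_enough n \<alpha>" "p_min n \<le> p"
  shows "10 \<le> real n * p" "10 * real n \<le> (real n)^2 * p"
proof -
  note n = large_enoughD[OF assms(1)]
  have "sqrt 100 \<le> sqrt (real n)" using n by (subst real_sqrt_le_iff) simp
  then have s10: "10 \<le> sqrt (real n)" by (simp add: real_sqrt_eq_iff)
  have a: "1 \<le> sqrt (real n) * p"
    using ln_sq_le_sqrt_mult[OF assms] n by (smt (verit, best) one_le_power)
  have "real n * p = sqrt (real n) * (sqrt (real n) * p)" by (simp add: algebra_simps)
  also have "\<dots> \<ge> 10 * 1" using s10 a by (intro mult_mono) auto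
  finally show b: "10 \<le> real n * p" by simp
  have "(real n)^2 * p = real n * (real n * p)" by (simp add: power2_eq_square)
  also have "\<dots> \<ge> real n * 10" using b n by (intro mult_left_mono) auto
  finally show "10 * real n \<le> (real n)^2 * p" by simp
qed

lemma edges_at_density_ge:
  assumes "large_enough n \<alpha>" "p_min n \<le> p"
  shows "30 \<le> ((real n)^2 * p - real n) / 2"
  using n_mult_p_ge(2)[OF assms] large_enoughD(1)[OF assms(1)] by simp

lemma mart_bound_pos:
  assumes "large_enough n \<alpha>" "\<alpha> > 0" "p_min n \<le> p" "p \<le> 1"
  shows "0 < mart_bound n \<alpha> p"
proof -
  have "0 < tri_scale (((real n)^2 * p - real n) / 2)"
    using tri_scale_pos edges_at_density_ge[OF assms(1,3)] by simp
  moreover have "0 < p" using p_min_pos[OF assms(1)] assms by simp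
  moreover have "0 < Phi p n" using Phi_bounds[OF assms(1,3,4)] by simp
  moreover have "0 < real n" using large_enoughD(1)[OF assms(1)] by simp
  ultimately show ?thesis unfolding mart_bound_def using assms(2) by simp
qed

lemma mart_bound_antimono:
  assumes "large_enough n \<alpha>" "\<alpha> > 0" "p_min n \<le> p" "p \<le> q" "q \<le> 1"
  shows "mart_bound n \<alpha> q \<le> mart_bound n \<alpha> p"
proof -
  define m where "m = ((real n)^2 * p - real n) / 2"
  define m' where "m' = ((real n)^2 * q - real n) / 2"
  have n: "1 < real n" using large_enoughD(1)[OF assms(1)] by simp
  have p0: "0 < p" using p_min_pos[OF assms(1)] assms by simp
  have m30: "30 \<le> m" using edges_at_density_ge[OF assms(1,3)] by (simp add: m_def)
  have mm: "m \<le> m'" unfolding m_def m'_def using assms(4) by (simp add: mult_left_mono)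
  have f: "0 < tri_scale m" "0 < tri_scale m'" using tri_scale_pos m30 mm by auto
  have ph: "(Phi q n)^2 \<le> (Phi p n)^2"
    using Phi_antimono[OF p0 assms(4) n] Phi_bounds(3)[of n \<alpha> q] assms
    by (smt (verit) Phi_bounds(3) order_trans power_mono)
  have "mart_bound n \<alpha> q = (\<alpha>^2 / 2) * (Phi q n)^2 * ((2 * m' + real n) / tri_scale m')"
    unfolding mart_bound_def m'_def[symmetric] using f by (simp add: m'_def field_simps)
  also have "\<dots> \<le> (\<alpha>^2 / 2) * (Phi p n)^2 * ((2 * m + real n) / tri_scale m)"
  proof (rule mult_mono[OF mult_left_mono[OF ph]])
    show "(2 * m' + real n) / tri_scale m' \<le> (2 * m + real n) / tri_scale m"
      using tri_scale_quotient_antimono[OF m30 mm] by simp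
    show "0 \<le> (2 * m' + real n) / tri_scale m'" using f m30 mm by simp
  qed auto
  also have "\<dots> = mart_bound n \<alpha> p"
    unfolding mart_bound_def m_def[symmetric] using f by (simp add: m_def field_simps)
  finally show ?thesis .
qed

lemma codeg_err_bounds:
  assumes "large_enough n \<alpha>" "\<alpha> > 0" "p_min n \<le> p" "p \<le> 1"
  shows "4 * codeg_err n \<alpha> p \<le> real n * p^2" "0 \<le> codeg_err n \<alpha> p"
    "(codeg_err n \<alpha> p)^2 = real n * p^2 * (\<alpha>^2 * (Phi p n)^2)"
proof -
  have n: "0 < real n" using large_enoughD(1)[OF assms(1)] by simp
  have p: "0 < p" using p_min_pos[OF assms(1)] assms by simp
  have "4 * codeg_err n \<alpha> p = (sqrt (real n) * p) * (4 * \<alpha> * Phi p n)"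
    unfolding codeg_err_def by simp
  also have "\<dots> \<le> (sqrt (real n) * p) * (sqrt (real n) * p)"
    using four_alpha_Phi_le[OF assms] n p by (intro mult_left_mono) auto
  also have "\<dots> = real n * p^2" using n by (simp add: power2_eq_square)
  finally show "4 * codeg_err n \<alpha> p \<le> real n * p^2" .
  show "0 \<le> codeg_err n \<alpha> p"
    unfolding codeg_err_def using assms(2) p Phi_bounds(3)[OF assms(1,3,4)] by simp
  show "(codeg_err n \<alpha> p)^2 = real n * p^2 * (\<alpha>^2 * (Phi p n)^2)"
    unfolding codeg_err_def using n by (simp add: power_mult_distrib)
qed

lemma codeg_err_sq_le_mart_bound_sq:
  assumes "large_enough n \<alpha>" "\<alpha> > 0" "p_min n \<le> p - 6 / (real n)^2" "p \<le> 1"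
  defines "m \<equiv> ((real n)^2 * p - real n) / 2"
  shows "9 * (codeg_err n \<alpha> p)^2 / (tri_scale (m - 3))^2
    \<le> (144 / (\<alpha>^2 * (real n)^3)) * (mart_bound n \<alpha> p)^2"
proof -
  note f = large_enoughD[OF assms(1)]
  have n0: "0 < real n" using f by simp
  have "m - 3 = ((real n)^2 * (p - 6 / (real n)^2) - real n) / 2"
    unfolding m_def using n0 by (simp add: field_simps)
  then have m30: "30 \<le> m - 3" using edges_at_density_ge[OF assms(1,3)] by simp
  have thp: "p_min n \<le> p" using assms(3) n0 by (smt (verit) divide_pos_pos zero_less_power)
  have Ph: "1 \<le> Phi p n" using Phi_bounds(1)[OF assms(1) thp assms(4)] f by simp
  have F1: "0 < tri_scale (m - 3)" and F2: "0 < tri_scale m" using tri_scale_pos m30 by auto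
  have "tri_scale m \<le> 2 * tri_scale (m - 3)" using tri_scale_le_double m30 by simp
  also have "\<dots> \<le> 2 * Phi p n * tri_scale (m - 3)" using Ph F1 by simp
  finally have "(tri_scale m)^2 \<le> (2 * Phi p n * tri_scale (m - 3))^2"
    using F2 by (intro power_mono) auto
  then have B: "(tri_scale m)^2 \<le> 4 * (Phi p n)^2 * (tri_scale (m - 3))^2"
    by (simp add: power_mult_distrib)
  define K where "K = \<alpha>^2 * real n * p^2 * (Phi p n)^2"
  have "9 * K * (tri_scale m)^2 \<le> 9 * K * (4 * (Phi p n)^2 * (tri_scale (m - 3))^2)"
    using B n0 by (intro mult_left_mono) (auto simp: K_def)
  then have "9 * K / (tri_scale (m - 3))^2 \<le> 36 * K * (Phi p n)^2 / (tri_scale m)^2"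
    using F1 F2 by (simp add: divide_simps)
  moreover have "(codeg_err n \<alpha> p)^2 = K"
    unfolding K_def codeg_err_def using n0 by (simp add: power_mult_distrib)
  moreover have "(144 / (\<alpha>^2 * (real n)^3)) * (mart_bound n \<alpha> p)^2 = 36 * K * (Phi p n)^2 / (tri_scale m)^2"
    unfolding K_def mart_bound_def m_def[symmetric] using n0 assms(2) F2
    by (simp add: field_simps power2_eq_square power3_eq_cube)
  ultimately show ?thesis by simp
qed

section \<open>One step of the process\<close>

text \<open>The density is defined from the edge count so that it equals \<open>pp n i\<close> after \<open>i\<close> steps.\<close>
definition density :: "nat \<Rightarrow> nat set set \<Rightarrow> real" where
  "density n G = (2 * real (card G) + real n) / (real n)^2"

definition codeg_concentrated :: "nat \<Rightarrow> real \<Rightarrow> nat set set \<Rightarrow> bool" where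
  "codeg_concentrated n \<alpha> G \<longleftrightarrow> (\<forall>u<n. \<forall>v<n. u \<noteq> v \<longrightarrow>
      \<bar>real (codeg G u v) - real n * (density n G)^2\<bar> \<le> codeg_err n \<alpha> (density n G))"

definition tame :: "nat \<Rightarrow> real \<Rightarrow> nat set set \<Rightarrow> bool" where
  "tame n \<alpha> G \<longleftrightarrow> triangles G \<noteq> {} \<and> p_min n \<le> density n G - 6 / (real n)^2
     \<and> codeg_concentrated n \<alpha> G"

definition tri_ratio :: "nat set set \<Rightarrow> real" where
  "tri_ratio G = real (num_triangles G) / tri_scale (real (card G))"

definition exp_next_tri_ratio :: "nat set set \<Rightarrow> real" where
  "exp_next_tri_ratio G =
     (\<Sum>T\<in>triangles G. tri_ratio (remove_triangle G T)) / real (card (triangles G))"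

lemma card_eq_density: "0 < n \<Longrightarrow> real (card G) = ((real n)^2 * density n G - real n) / 2"
  unfolding density_def by (simp add: field_simps)

lemma density_le_1:
  assumes "graph_on n G" "0 < n"
  shows "density n G \<le> 1"
proof -
  have "2 * real (card G) \<le> real n * (real n - 1)"
    using graph_on_card_le[OF assms(1)] real_choose_two[of n] by (metis of_nat_le_iff mult_right_mono
      mult.commute of_nat_0_le_iff zero_le_numeral)
  then show ?thesis unfolding density_def using assms(2) by (simp add: divide_simps power2_eq_square algebra_simps)
qed

lemma density_remove_triangle:
  assumes "graph_on n G" "T \<in> triangles G"
  shows "density n (remove_triangle G T) = density n G - 6 / (real n)^2"
proof -
  have "real (card (remove_triangle G T)) = real (card G) - 3"
    using card_remove_triangle[OF assms] by linarith
  then show ?thesis unfolding density_def by (simp add: diff_divide_distrib[symmetric] algebra_simps)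
qed

lemma tame_density_ge:
  assumes "large_enough n \<alpha>" "tame n \<alpha> G"
  shows "p_min n \<le> density n G" "30 \<le> real (card G) - 3"
proof -
  have n: "0 < n" using large_enoughD(1)[OF assms(1)] by simp
  have th: "p_min n \<le> density n G - 6 / (real n)^2" using assms(2) by (simp add: tame_def)
  moreover have "0 < 6 / (real n)^2" using n by simp
  ultimately show "p_min n \<le> density n G" by linarith
  have "real (card G) - 3 = ((real n)^2 * (density n G - 6 / (real n)^2) - real n) / 2"
    using card_eq_density[OF n, of G] n by (simp add: right_diff_distrib)
  then show "30 \<le> real (card G) - 3" using edges_at_density_ge[OF assms(1) th] by simp
qed

lemma tri_deg_close:
  assumes "graph_on n G" "codeg_concentrated n \<alpha> G" "e \<in> G"
  shows "\<bar>real (tri_deg G e) - real n * (density n G)^2\<bar> \<le> codeg_err n \<alpha> (density n G)"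
proof -
  obtain u v where uv: "e = {u,v}" "u \<noteq> v" "u < n" "v < n"
    using graph_on_edge[OF assms(1,3)] by (auto simp: card_2_iff)
  then have "tri_deg G e = codeg G u v" using tri_deg_eq_codeg[OF assms(1)] assms(3) by simp
  then show ?thesis using assms(2) uv unfolding codeg_concentrated_def by simp
qed

lemma tri_ratio_remove_triangle:
  assumes "graph_on n G" "T \<in> triangles G"
  shows "tri_ratio (remove_triangle G T) =
    (real (num_triangles G) + 2 - (\<Sum>e\<in>edges_in T. real (tri_deg G e))) / tri_scale (real (card G) - 3)"
proof -
  have "real (num_triangles (remove_triangle G T) + (\<Sum>e\<in>edges_in T. tri_deg G e))
      = real (num_triangles G + 2)"
    using num_triangles_remove_triangle[OF assms] by (simp only:)
  then have "real (num_triangles (remove_triangle G T)) =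
      real (num_triangles G) + 2 - (\<Sum>e\<in>edges_in T. real (tri_deg G e))"
    by simp
  moreover have "real (card (remove_triangle G T)) = real (card G) - 3"
    using card_remove_triangle[OF assms] by linarith
  ultimately show ?thesis unfolding tri_ratio_def by simp
qed

lemma exp_next_tri_ratio_drift:
  assumes "graph_on n G" "triangles G \<noteq> {}" "12 \<le> card G"
  defines "Q \<equiv> real (num_triangles G)" and "m \<equiv> real (card G)"
  shows "exp_next_tri_ratio G - tri_ratio G =
    (2 - (\<Sum>e\<in>G. (real (tri_deg G e) - 3 * Q / m)^2) / Q) / tri_scale (m - 3)"
proof -
  have Q0: "0 < Q" using finite_triangles[OF assms(1)] assms(2)
    by (simp add: Q_def num_triangles_def card_gt_0_iff)
  have m12: "12 \<le> m" using assms(3) m_def by simp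
  have G: "finite G" "G \<noteq> {}" using graph_on_finite[OF assms(1)] assms(3) by auto
  define Y2 where "Y2 = (\<Sum>e\<in>G. (real (tri_deg G e))^2)"
  have "(\<Sum>T\<in>triangles G. tri_ratio (remove_triangle G T))
      = (\<Sum>T\<in>triangles G. (Q + 2 - (\<Sum>e\<in>edges_in T. real (tri_deg G e)))) / tri_scale (m - 3)"
    by (simp add: tri_ratio_remove_triangle[OF assms(1)] Q_def m_def sum_divide_distrib)
  also have "(\<Sum>T\<in>triangles G. (Q + 2 - (\<Sum>e\<in>edges_in T. real (tri_deg G e)))) = Q * (Q + 2) - Y2"
    using sum_triangles_tri_deg[OF assms(1)] by (simp add: sum_subtractf Q_def Y2_def num_triangles_def)
  finally have EW: "exp_next_tri_ratio G = (Q * (Q + 2) - Y2) / (Q * tri_scale (m - 3))"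
    unfolding exp_next_tri_ratio_def using Q0 by (simp add: Q_def num_triangles_def field_simps)
  have V: "(\<Sum>e\<in>G. (real (tri_deg G e) - 3 * Q / m)^2) = Y2 - 9 * Q^2 / m"
    using sum_sq_dev_mean_eq[OF G, of "\<lambda>e. real (tri_deg G e)"] sum_tri_deg[OF assms(1)]
    by (simp add: Y2_def Q_def m_def power_mult_distrib)
  define R where "R = (m - 3) * (m - 6)"
  have ts: "tri_scale m = m * R" "tri_scale (m - 3) = R * (m - 9)"
    unfolding tri_scale_def R_def by (simp_all add: algebra_simps)
  have "0 < R" "m - 9 \<noteq> 0" "m \<noteq> 0" using m12 by (auto simp: R_def)
  then show ?thesis unfolding EW V tri_ratio_def Q_def[symmetric] m_def[symmetric] ts using Q0
    by (simp add: field_simps power2_eq_square)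
qed

lemma tame_sum_sq_dev_tri_deg_le:
  assumes "graph_on n G" "tame n \<alpha> G"
  shows "(\<Sum>e\<in>G. (real (tri_deg G e) - 3 * real (num_triangles G) / real (card G))^2)
    \<le> real (card G) * (codeg_err n \<alpha> (density n G))^2"
proof -
  define c where "c = real n * (density n G)^2"
  obtain T where T: "T \<in> triangles G" using assms(2) by (auto simp: tame_def)
  have G: "finite G" "G \<noteq> {}"
    using graph_on_finite[OF assms(1)] edges_in_triangle_subset[OF T] card_edges_in_triangle[OF T]
    by auto
  have "(\<Sum>e\<in>G. (real (tri_deg G e) - 3 * real (num_triangles G) / real (card G))^2)
      \<le> (\<Sum>e\<in>G. (real (tri_deg G e) - c)^2)"
    using sum_sq_dev_mean_le[OF G, of "\<lambda>e. real (tri_deg G e)" c] by (simp add: sum_tri_deg[OF assms(1)])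
  also have "\<dots> \<le> (\<Sum>e\<in>G. (codeg_err n \<alpha> (density n G))^2)"
  proof (rule sum_mono)
    fix e assume "e \<in> G"
    then have "\<bar>real (tri_deg G e) - c\<bar>^2 \<le> (codeg_err n \<alpha> (density n G))^2"
      using tri_deg_close[OF assms(1)] assms(2) by (intro power_mono) (auto simp: tame_def c_def)
    then show "(real (tri_deg G e) - c)^2 \<le> (codeg_err n \<alpha> (density n G))^2" by simp
  qed
  finally show ?thesis by simp
qed

lemma tame_num_triangles_ge:
  assumes "large_enough n \<alpha>" "\<alpha> > 0" "graph_on n G" "tame n \<alpha> G"
  shows "real (card G) * (real n * (density n G)^2) / 4 \<le> real (num_triangles G)"
proof -
  define c where "c = real n * (density n G)^2"
  define \<epsilon> where "\<epsilon> = codeg_err n \<alpha> (density n G)"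
  have "4 * \<epsilon> \<le> c"
    using codeg_err_bounds(1)[OF assms(1,2)] tame_density_ge(1)[OF assms(1,4)]
      density_le_1[OF assms(3)] large_enoughD(1)[OF assms(1)] by (simp add: c_def \<epsilon>_def)
  then have "real (card G) * (3 * c / 4) \<le> real (card G) * (c - \<epsilon>)"
    by (intro mult_left_mono) auto
  also have "\<dots> = (\<Sum>e\<in>G. c - \<epsilon>)" by simp
  also have "\<dots> \<le> (\<Sum>e\<in>G. real (tri_deg G e))"
    using tri_deg_close[OF assms(3)] assms(4)
    by (intro sum_mono) (fastforce simp: abs_le_iff tame_def c_def \<epsilon>_def)
  also have "\<dots> = 3 * real (num_triangles G)" by (rule sum_tri_deg[OF assms(3)])
  finally show ?thesis by (simp add: c_def mult_ac)
qed

lemma tame_tri_ratio_drift_le: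
  assumes "large_enough n \<alpha>" "\<alpha> > 0" "graph_on n G" "tame n \<alpha> G"
  shows "\<bar>exp_next_tri_ratio G - tri_ratio G\<bar>
    \<le> (2 + 4 * \<alpha>^2 * (Phi (density n G) n)^2) / tri_scale (real (card G) - 3)"
proof -
  define p where "p = density n G"
  define Q where "Q = real (num_triangles G)"
  define m where "m = real (card G)"
  define V where "V = (\<Sum>e\<in>G. (real (tri_deg G e) - 3 * Q / m)^2)"
  have m30: "30 \<le> m - 3" using tame_density_ge(2)[OF assms(1,4)] by (simp add: m_def)
  have c0: "0 < real n * p^2"
    using p_min_pos[OF assms(1)] tame_density_ge(1)[OF assms(1,4)] large_enoughD(1)[OF assms(1)]
    by (simp add: p_def)
  have Qlow: "m * (real n * p^2) / 4 \<le> Q"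
    using tame_num_triangles_ge[OF assms] by (simp add: m_def p_def Q_def)
  have Q0: "0 < Q" using Qlow m30 c0 by (smt (verit) divide_pos_pos mult_pos_pos)
  have "V \<le> m * (real n * p^2 * (\<alpha>^2 * (Phi p n)^2))"
    using tame_sum_sq_dev_tri_deg_le[OF assms(3,4)] codeg_err_bounds(3)[OF assms(1,2)]
      tame_density_ge(1)[OF assms(1,4)] density_le_1[OF assms(3)] large_enoughD(1)[OF assms(1)]
    by (simp add: V_def Q_def m_def p_def)
  then have "V / Q \<le> (m * (real n * p^2) * (\<alpha>^2 * (Phi p n)^2)) / Q"
    using Q0 by (intro divide_right_mono) (auto simp: mult.assoc)
  also have "\<dots> \<le> (m * (real n * p^2) * (\<alpha>^2 * (Phi p n)^2)) / (m * (real n * p^2) / 4)"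
    using Qlow m30 c0 Q0 by (intro divide_left_mono) auto
  also have "\<dots> = 4 * \<alpha>^2 * (Phi p n)^2"
  proof -
    have "m \<noteq> 0" "real n \<noteq> 0" "p \<noteq> 0" using m30 c0 by (auto simp: zero_less_mult_iff)
    then show ?thesis by (simp add: field_simps)
  qed
  finally have "V / Q \<le> 4 * \<alpha>^2 * (Phi p n)^2" .
  moreover have "0 \<le> V / Q" by (simp add: V_def Q_def sum_nonneg)
  ultimately have "\<bar>2 - V / Q\<bar> \<le> 2 + 4 * \<alpha>^2 * (Phi p n)^2" by linarith
  moreover have "exp_next_tri_ratio G - tri_ratio G = (2 - V / Q) / tri_scale (m - 3)"
    using exp_next_tri_ratio_drift[OF assms(3)] assms(4) m30 by (simp add: tame_def V_def Q_def m_def)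
  moreover have "0 < tri_scale (m - 3)" using tri_scale_pos m30 by simp
  ultimately show ?thesis by (simp add: divide_right_mono p_def m_def)
qed

lemma tame_tri_ratio_variance_le:
  assumes "large_enough n \<alpha>" "\<alpha> > 0" "graph_on n G" "tame n \<alpha> G"
  shows "(\<Sum>T\<in>triangles G. (tri_ratio (remove_triangle G T) - exp_next_tri_ratio G)^2)
     \<le> real (num_triangles G) * (9 * (codeg_err n \<alpha> (density n G))^2 / (tri_scale (real (card G) - 3))^2)"
proof -
  define p where "p = density n G"
  define c where "c = real n * p^2"
  define \<epsilon> where "\<epsilon> = codeg_err n \<alpha> p"
  define F where "F = tri_scale (real (card G) - 3)"
  define a where "a = (real (num_triangles G) + 2 - 3 * c) / F"
  have ne: "triangles G \<noteq> {}" and conc: "codeg_concentrated n \<alpha> G"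
    using assms(4) by (auto simp: tame_def)
  have pmin: "p_min n \<le> p" using tame_density_ge[OF assms(1,4)] by (simp add: p_def)
  have \<epsilon>0: "0 \<le> \<epsilon>"
    using codeg_err_bounds(2)[OF assms(1,2) pmin] density_le_1[OF assms(3)] large_enoughD(1)[OF assms(1)]
    by (simp add: \<epsilon>_def p_def)
  have "(\<Sum>T\<in>triangles G. (tri_ratio (remove_triangle G T) - exp_next_tri_ratio G)^2)
      \<le> (\<Sum>T\<in>triangles G. (tri_ratio (remove_triangle G T) - a)^2)"
    unfolding exp_next_tri_ratio_def by (rule sum_sq_dev_mean_le[OF finite_triangles[OF assms(3)] ne])
  also have "\<dots> \<le> (\<Sum>T\<in>triangles G. 9 * \<epsilon>^2 / F^2)"
  proof (rule sum_mono)
    fix T assume T: "T \<in> triangles G"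
    have "\<bar>(\<Sum>e\<in>edges_in T. real (tri_deg G e)) - 3 * c\<bar> = \<bar>\<Sum>e\<in>edges_in T. (real (tri_deg G e) - c)\<bar>"
      using card_edges_in_triangle[OF T] by (simp add: sum_subtractf)
    also have "\<dots> \<le> (\<Sum>e\<in>edges_in T. \<epsilon>)"
      using tri_deg_close[OF assms(3) conc] edges_in_triangle_subset[OF T]
      by (intro order_trans[OF sum_abs] sum_mono) (auto simp: c_def \<epsilon>_def p_def)
    also have "\<dots> = 3 * \<epsilon>" using card_edges_in_triangle[OF T] by simp
    finally have "\<bar>(\<Sum>e\<in>edges_in T. real (tri_deg G e)) - 3 * c\<bar>^2 \<le> (3 * \<epsilon>)^2"
      by (intro power_mono) auto
    then have "((\<Sum>e\<in>edges_in T. real (tri_deg G e)) - 3 * c)^2 \<le> (3 * \<epsilon>)^2" by simp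
    moreover have "tri_ratio (remove_triangle G T) - a = (3 * c - (\<Sum>e\<in>edges_in T. real (tri_deg G e))) / F"
      unfolding tri_ratio_remove_triangle[OF assms(3) T] a_def F_def by (simp add: diff_divide_distrib[symmetric])
    ultimately show "(tri_ratio (remove_triangle G T) - a)^2 \<le> 9 * \<epsilon>^2 / F^2"
      by (simp add: power_divide power2_commute divide_right_mono power_mult_distrib)
  qed
  finally show ?thesis by (simp add: num_triangles_def F_def \<epsilon>_def p_def)
qed

section \<open>The martingale and its potential\<close>

definition mart_incr :: "nat \<Rightarrow> real \<Rightarrow> nat set set \<Rightarrow> nat set set \<Rightarrow> real" where
  "mart_incr n \<alpha> G G' = (if tame n \<alpha> G then tri_ratio G' - exp_next_tri_ratio G else 0)"

definition mart :: "nat \<Rightarrow> real \<Rightarrow> nat set set list \<Rightarrow> real" where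
  "mart n \<alpha> gs = (\<Sum>j < length gs - 1. mart_incr n \<alpha> (gs ! j) (gs ! Suc j))"

definition mart_exceeds :: "nat \<Rightarrow> real \<Rightarrow> nat set set list \<Rightarrow> bool" where
  "mart_exceeds n \<alpha> gs \<longleftrightarrow> (\<exists>j < length gs. p_min n \<le> density n (gs ! j) \<and>
      mart_bound n \<alpha> (density n (gs ! j)) \<le> \<bar>mart n \<alpha> (take (Suc j) gs)\<bar>)"

definition mart_scale :: "nat \<Rightarrow> real \<Rightarrow> nat set set list \<Rightarrow> real" where
  "mart_scale n \<alpha> gs = mart_bound n \<alpha> (max (density n (last gs)) (p_min n))"

text \<open>Frozen at \<open>1\<close> once the martingale has exceeded its allowance, and \<open>M\<^sup>2/C\<^sup>2\<close> before,
  where the scale \<open>C\<close> only grows along the process; so the potential dominates the indicator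
  of \<open>mart_exceeds\<close> and its expectation grows by at most \<open>144/(\<alpha>\<^sup>2n\<^sup>3)\<close> per step.\<close>
definition potential :: "nat \<Rightarrow> real \<Rightarrow> nat set set list \<Rightarrow> real" where
  "potential n \<alpha> gs = (if mart_exceeds n \<alpha> gs then 1 else (mart n \<alpha> gs)^2 / (mart_scale n \<alpha> gs)^2)"

lemma potential_nonneg: "0 \<le> potential n \<alpha> gs"
  unfolding potential_def by simp

lemma mart_snoc:
  assumes "gs \<noteq> []"
  shows "mart n \<alpha> (gs @ [g]) = mart n \<alpha> gs + mart_incr n \<alpha> (last gs) g"
proof -
  obtain k where k: "length gs = Suc k" using assms by (cases gs) auto
  have "(\<Sum>j < k. mart_incr n \<alpha> ((gs @ [g]) ! j) ((gs @ [g]) ! Suc j))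
      = (\<Sum>j < k. mart_incr n \<alpha> (gs ! j) (gs ! Suc j))"
    using k by (intro sum.cong) (auto simp: nth_append)
  moreover have "(gs @ [g]) ! k = last gs" "(gs @ [g]) ! Suc k = g"
    using k assms by (simp_all add: nth_append last_conv_nth)
  ultimately show ?thesis unfolding mart_def using k by simp
qed

lemma mart_take:
  assumes "i < length gs"
  shows "mart n \<alpha> (take (Suc i) gs) = (\<Sum>j<i. mart_incr n \<alpha> (gs ! j) (gs ! Suc j))"
  unfolding mart_def using assms by (intro sum.cong) (auto simp: min_def)

lemma mart_exceeds_snoc:
  "mart_exceeds n \<alpha> (gs @ [g]) \<longleftrightarrow> mart_exceeds n \<alpha> gs \<or>
     (p_min n \<le> density n g \<and> mart_bound n \<alpha> (density n g) \<le> \<bar>mart n \<alpha> (gs @ [g])\<bar>)"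
proof -
  have "(\<exists>j < length gs. p_min n \<le> density n ((gs @ [g]) ! j) \<and>
      mart_bound n \<alpha> (density n ((gs @ [g]) ! j)) \<le> \<bar>mart n \<alpha> (take (Suc j) (gs @ [g]))\<bar>)
    \<longleftrightarrow> mart_exceeds n \<alpha> gs"
    unfolding mart_exceeds_def by (intro ex_cong1) (auto simp: nth_append)
  then show ?thesis unfolding mart_exceeds_def[of n \<alpha> "gs @ [g]"] by (auto simp: less_Suc_eq)
qed

lemma sum_mart_incr_eq_0:
  assumes "graph_on n G"
  shows "(\<Sum>T\<in>triangles G. mart_incr n \<alpha> G (remove_triangle G T)) = 0"
proof (cases "tame n \<alpha> G")
  case True
  then have "0 < real (card (triangles G))"
    using finite_triangles[OF assms] by (simp add: tame_def card_gt_0_iff)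
  then show ?thesis using True by (simp add: mart_incr_def sum_subtractf exp_next_tri_ratio_def)
qed (simp add: mart_incr_def)

lemma sum_mart_incr_sq_le:
  assumes "large_enough n \<alpha>" "\<alpha> > 0" "graph_on n G"
  shows "(\<Sum>T\<in>triangles G. (mart_incr n \<alpha> G (remove_triangle G T))^2)
     \<le> real (num_triangles G) * ((144 / (\<alpha>^2 * (real n)^3)) * (mart_bound n \<alpha> (max (density n G) (p_min n)))^2)"
proof (cases "tame n \<alpha> G")
  case True
  have n0: "0 < n" using large_enoughD(1)[OF assms(1)] by simp
  have th: "p_min n \<le> density n G - 6 / (real n)^2" using True by (simp add: tame_def)
  have mx: "max (density n G) (p_min n) = density n G"
    using tame_density_ge(1)[OF assms(1) True] by simp
  have "(\<Sum>T\<in>triangles G. (mart_incr n \<alpha> G (remove_triangle G T))^2) =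
      (\<Sum>T\<in>triangles G. (tri_ratio (remove_triangle G T) - exp_next_tri_ratio G)^2)"
    using True by (simp add: mart_incr_def)
  also have "\<dots> \<le> real (num_triangles G) *
      (9 * (codeg_err n \<alpha> (density n G))^2 / (tri_scale (real (card G) - 3))^2)"
    by (rule tame_tri_ratio_variance_le[OF assms True])
  also have "\<dots> \<le> real (num_triangles G) * ((144 / (\<alpha>^2 * (real n)^3)) * (mart_bound n \<alpha> (density n G))^2)"
    using codeg_err_sq_le_mart_bound_sq[OF assms(1,2) th density_le_1[OF assms(3) n0]]
    by (intro mult_left_mono) (simp_all add: card_eq_density[OF n0])
  finally show ?thesis unfolding mx .
qed (simp add: mart_incr_def)

lemma potential_snoc_le:
  assumes "large_enough n \<alpha>" "\<alpha> > 0" "gs \<noteq> []" "graph_on n (last gs)"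
    and "T \<in> triangles (last gs)" "\<not> mart_exceeds n \<alpha> gs"
  defines "g \<equiv> remove_triangle (last gs) T"
  shows "potential n \<alpha> (gs @ [g]) \<le> (mart n \<alpha> gs + mart_incr n \<alpha> (last gs) g)^2 / (mart_scale n \<alpha> gs)^2"
proof -
  define M where "M = mart n \<alpha> gs + mart_incr n \<alpha> (last gs) g"
  define C where "C = mart_scale n \<alpha> gs"
  have n0: "0 < real n" using large_enoughD(1)[OF assms(1)] by simp
  have pmin: "p_min n \<le> 1" using large_enoughD(5)[OF assms(1)] .
  have dens: "density n (last gs) \<le> 1" "density n g \<le> 1"
    using density_le_1 graph_on_remove_triangle assms(4) n0 by (auto simp: g_def)
  have C0: "0 < C" unfolding C_def mart_scale_def
    using dens pmin by (intro mart_bound_pos[OF assms(1,2)]) auto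
  have "density n g \<le> density n (last gs)"
    using density_remove_triangle[OF assms(4,5)] n0 by (simp add: g_def)
  then have Cle: "C \<le> mart_scale n \<alpha> (gs @ [g])"
    unfolding C_def mart_scale_def using dens pmin
    by (intro mart_bound_antimono[OF assms(1,2)]) (auto simp: max_def)
  have Mg: "mart n \<alpha> (gs @ [g]) = M" using mart_snoc[OF assms(3)] M_def by simp
  show ?thesis
  proof (cases "mart_exceeds n \<alpha> (gs @ [g])")
    case True
    then have "p_min n \<le> density n g" "mart_bound n \<alpha> (density n g) \<le> \<bar>M\<bar>"
      using assms(6) mart_exceeds_snoc[of n \<alpha> gs g] Mg by auto
    then have "C \<le> \<bar>M\<bar>" using Cle by (simp add: mart_scale_def)
    then have "C^2 \<le> \<bar>M\<bar>^2" using C0 by (intro power_mono) auto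
    then show ?thesis using True C0 by (simp add: potential_def M_def C_def)
  next
    case False
    have "C^2 \<le> (mart_scale n \<alpha> (gs @ [g]))^2" using Cle C0 by (intro power_mono) auto
    moreover have "0 < (mart_scale n \<alpha> (gs @ [g]))^2 * C^2" using Cle C0 by simp
    ultimately have "M^2 / (mart_scale n \<alpha> (gs @ [g]))^2 \<le> M^2 / C^2"
      by (intro divide_left_mono) auto
    then show ?thesis using False Mg by (simp add: potential_def M_def C_def)
  qed
qed

lemma potential_step_le:
  assumes "large_enough n \<alpha>" "\<alpha> > 0" "gs \<noteq> []" "graph_on n (last gs)" "triangles (last gs) \<noteq> {}"
  shows "(\<Sum>T\<in>triangles (last gs). potential n \<alpha> (gs @ [remove_triangle (last gs) T]))
      / real (num_triangles (last gs)) \<le> potential n \<alpha> gs + 144 / (\<alpha>^2 * (real n)^3)"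
proof -
  define G where "G = last gs"
  define Q where "Q = real (num_triangles G)"
  define \<delta> where "\<delta> = 144 / (\<alpha>^2 * (real n)^3)"
  have G: "graph_on n G" "triangles G \<noteq> {}" using assms(4,5) by (simp_all add: G_def)
  have Q0: "0 < Q" using finite_triangles[OF G(1)] G(2) by (simp add: Q_def num_triangles_def card_gt_0_iff)
  show ?thesis
  proof (cases "mart_exceeds n \<alpha> gs")
    case True
    then have "(\<Sum>T\<in>triangles G. potential n \<alpha> (gs @ [remove_triangle G T])) = Q"
      by (simp add: potential_def mart_exceeds_snoc Q_def num_triangles_def)
    then show ?thesis using Q0 True unfolding G_def[symmetric] Q_def[symmetric]
      by (simp add: potential_def)
  next
    case False
    define M where "M = mart n \<alpha> gs"
    define C where "C = mart_scale n \<alpha> gs"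
    define x where "x T = mart_incr n \<alpha> G (remove_triangle G T)" for T
    have n0: "0 < n" using large_enoughD(1)[OF assms(1)] by simp
    have C0: "0 < C" unfolding C_def mart_scale_def G_def[symmetric]
      using density_le_1[OF G(1) n0] large_enoughD(5)[OF assms(1)]
      by (intro mart_bound_pos[OF assms(1,2)]) auto
    have "(\<Sum>T\<in>triangles G. potential n \<alpha> (gs @ [remove_triangle G T])) \<le> (\<Sum>T\<in>triangles G. (M + x T)^2 / C^2)"
      using potential_snoc_le[OF assms(1-4) _ False] by (intro sum_mono) (simp add: M_def C_def x_def G_def)
    also have "\<dots> = (Q * M^2 + 2 * M * (\<Sum>T\<in>triangles G. x T) + (\<Sum>T\<in>triangles G. (x T)^2)) / C^2"
      by (simp add: sum_divide_distrib[symmetric] power2_eq_square algebra_simps sum.distrib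
        sum_distrib_left Q_def num_triangles_def)
    also have "\<dots> \<le> (Q * M^2 + Q * (\<delta> * C^2)) / C^2"
      using sum_mart_incr_eq_0[OF G(1)] sum_mart_incr_sq_le[OF assms(1,2) G(1)] C0
      by (intro divide_right_mono) (simp_all add: x_def Q_def \<delta>_def C_def mart_scale_def G_def)
    also have "\<dots> = Q * (M^2 / C^2 + \<delta>)" using C0 by (simp add: field_simps)
    finally show ?thesis using False Q0 unfolding G_def[symmetric] Q_def[symmetric]
      by (simp add: potential_def M_def C_def \<delta>_def pos_divide_le_eq mult.commute)
  qed
qed

definition removal_path :: "nat \<Rightarrow> nat set set list \<Rightarrow> bool" where
  "removal_path n gs \<longleftrightarrow> gs \<noteq> [] \<and> gs ! 0 = complete_graph n \<and>
     (\<forall>j. Suc j < length gs \<longrightarrow> (\<exists>T\<in>triangles (gs ! j). gs ! Suc j = remove_triangle (gs ! j) T))"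

lemma removal_path_graph_on:
  assumes "removal_path n gs" "j < length gs"
  shows "graph_on n (gs ! j)"
  using assms(2)
proof (induction j)
  case (Suc j)
  then obtain T where "gs ! Suc j = remove_triangle (gs ! j) T"
    using assms(1) by (auto simp: removal_path_def)
  then show ?case using Suc graph_on_remove_triangle by simp
qed (use assms(1) in \<open>simp add: removal_path_def graph_on_complete_graph\<close>)

lemma removal_path_last_graph_on: "removal_path n gs \<Longrightarrow> graph_on n (last gs)"
  using removal_path_graph_on[of n gs "length gs - 1"] by (simp add: removal_path_def last_conv_nth)

lemma removal_path_card:
  assumes "removal_path n gs" "j < length gs"
  shows "card (gs ! j) + 3 * j = n choose 2"
  using assms(2)
proof (induction j)
  case (Suc j)
  then obtain T where "T \<in> triangles (gs ! j)" "gs ! Suc j = remove_triangle (gs ! j) T"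
    using assms(1) by (auto simp: removal_path_def)
  moreover have "card (gs ! Suc j) + 3 = card (gs ! j)"
    using card_remove_triangle[OF removal_path_graph_on[OF assms(1)]] calculation Suc.prems by simp
  ultimately show ?case using Suc by simp
qed (use assms(1) in \<open>simp add: removal_path_def card_complete_graph\<close>)

lemma removal_path_snoc:
  assumes "removal_path n gs" "T \<in> triangles (last gs)"
  shows "removal_path n (gs @ [remove_triangle (last gs) T])"
proof -
  define hs where "hs = gs @ [remove_triangle (last gs) T]"
  have gs: "gs \<noteq> []" "gs ! 0 = complete_graph n" using assms(1) by (auto simp: removal_path_def)
  have "\<exists>T'\<in>triangles (hs ! j). hs ! Suc j = remove_triangle (hs ! j) T'"
    if j: "Suc j < length hs" for j
  proof (cases "Suc j < length gs")
    case True then show ?thesis using assms(1) by (auto simp: removal_path_def nth_append hs_def)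
  next
    case False
    then have jj: "j = length gs - 1" "j < length gs" using j by (auto simp: hs_def)
    then have "hs ! j = last gs" using gs by (simp add: hs_def nth_append last_conv_nth)
    moreover have "hs ! Suc j = remove_triangle (last gs) T" using jj gs by (simp add: hs_def nth_append)
    ultimately show ?thesis using assms(2) by auto
  qed
  moreover have "hs \<noteq> []" "hs ! 0 = complete_graph n" using gs by (simp_all add: hs_def nth_append)
  ultimately show ?thesis unfolding removal_path_def hs_def by blast
qed

lemma removal_path_traj: "gs \<in> set_pmf (traj n k) \<Longrightarrow> removal_path n gs"
proof (induction k arbitrary: gs)
  case 0 then show ?case by (simp add: removal_path_def)
next
  case (Suc k)
  then obtain hs where hs: "hs \<in> set_pmf (traj n k)"
    and gs: "gs \<in> set_pmf (if triangles (last hs) = {} then return_pmf hs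
      else map_pmf (\<lambda>g. hs @ [g]) (removal_step (last hs)))" by auto
  have path: "removal_path n hs" using Suc.IH[OF hs] .
  show ?case
  proof (cases "triangles (last hs) = {}")
    case False
    have "finite (triangles (last hs))"
      using finite_triangles[OF removal_path_last_graph_on[OF path]] .
    then obtain T where "T \<in> triangles (last hs)" "gs = hs @ [remove_triangle (last hs) T]"
      using gs False by (auto simp: removal_step_def)
    then show ?thesis using removal_path_snoc[OF path] by simp
  qed (use gs path in simp)
qed

lemma density_removal_path:
  assumes "removal_path n gs" "j < length gs" "0 < n"
  shows "density n (gs ! j) = pp n j"
proof -
  have "real (card (gs ! j)) = real (n choose 2) - 3 * real j"
    using removal_path_card[OF assms(1,2)] by (metis add_diff_cancel_right' of_nat_add of_nat_mult of_nat_numeral)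
  then have "2 * real (card (gs ! j)) + real n = (real n)^2 - 6 * real j"
    using real_choose_two[of n] by (simp add: algebra_simps power2_eq_square)
  then show ?thesis unfolding density_def pp_def using assms(3) by (simp add: field_simps)
qed

lemma pp_antimono: "j \<le> i \<Longrightarrow> pp n i \<le> pp n j"
  unfolding pp_def by (simp add: divide_right_mono)

lemma pp_Suc: "pp n (Suc j) = pp n j - 6 / (real n)^2"
  unfolding pp_def by (simp add: algebra_simps add_divide_distrib)

lemma potential_initial:
  assumes "large_enough n \<alpha>" "\<alpha> > 0"
  shows "potential n \<alpha> [complete_graph n] = 0"
proof -
  have "density n (complete_graph n) \<le> 1"
    using density_le_1[OF graph_on_complete_graph] large_enoughD(1)[OF assms(1)] by simp
  then have "\<not> mart_exceeds n \<alpha> [complete_graph n]"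
    using mart_bound_pos[OF assms] by (force simp: mart_exceeds_def mart_def)
  then show ?thesis by (simp add: potential_def mart_def)
qed

lemma nn_integral_potential_step:
  assumes "large_enough n \<alpha>" "\<alpha> > 0" "removal_path n gs"
  shows "(\<integral>\<^sup>+hs. ennreal (potential n \<alpha> hs) \<partial>measure_pmf (if triangles (last gs) = {} then return_pmf gs
      else map_pmf (\<lambda>g. gs @ [g]) (removal_step (last gs))))
    \<le> ennreal (potential n \<alpha> gs) + ennreal (144 / (\<alpha>^2 * (real n)^3))"
proof (cases "triangles (last gs) = {}")
  case False
  define f where "f T = potential n \<alpha> (gs @ [remove_triangle (last gs) T])" for T
  have G: "graph_on n (last gs)" using removal_path_last_graph_on[OF assms(3)] .
  have fin: "finite (triangles (last gs))" using finite_triangles[OF G] .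
  have Q0: "0 < real (card (triangles (last gs)))" using fin False by (simp add: card_gt_0_iff)
  have "(\<integral>\<^sup>+hs. ennreal (potential n \<alpha> hs) \<partial>measure_pmf (map_pmf (\<lambda>g. gs @ [g]) (removal_step (last gs))))
      = (\<Sum>T\<in>triangles (last gs). ennreal (f T)) / of_nat (card (triangles (last gs)))"
    unfolding removal_step_def nn_integral_map_pmf f_def by (rule nn_integral_pmf_of_set[OF False fin])
  also have "\<dots> = ennreal ((\<Sum>T\<in>triangles (last gs). f T) / real (card (triangles (last gs))))"
  proof -
    have "(\<Sum>T\<in>triangles (last gs). ennreal (f T)) = ennreal (\<Sum>T\<in>triangles (last gs). f T)"
      by (rule sum_ennreal) (simp add: f_def potential_nonneg)
    moreover have "(of_nat (card (triangles (last gs))) :: ennreal) = ennreal (real (card (triangles (last gs))))"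
      by (rule ennreal_of_nat_eq_real_of_nat)
    ultimately show ?thesis using Q0 by (simp add: divide_ennreal sum_nonneg f_def potential_nonneg)
  qed
  also have "\<dots> \<le> ennreal (potential n \<alpha> gs + 144 / (\<alpha>^2 * (real n)^3))"
    using potential_step_le[OF assms(1,2) _ G False] assms(3) unfolding f_def
    by (intro ennreal_leI) (simp add: removal_path_def num_triangles_def)
  also have "\<dots> = ennreal (potential n \<alpha> gs) + ennreal (144 / (\<alpha>^2 * (real n)^3))"
    using potential_nonneg by (simp add: ennreal_plus)
  finally show ?thesis using False by simp
qed simp

lemma nn_integral_potential_traj_le:
  assumes "large_enough n \<alpha>" "\<alpha> > 0"
  shows "(\<integral>\<^sup>+gs. ennreal (potential n \<alpha> gs) \<partial>measure_pmf (traj n k))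
    \<le> ennreal (real k * (144 / (\<alpha>^2 * (real n)^3)))"
proof (induction k)
  case 0
  then show ?case using potential_initial[OF assms] by (simp add: nn_integral_return_pmf)
next
  case (Suc k)
  define \<delta> where "\<delta> = 144 / (\<alpha>^2 * (real n)^3)"
  have "(\<integral>\<^sup>+gs. ennreal (potential n \<alpha> gs) \<partial>measure_pmf (traj n (Suc k)))
      \<le> (\<integral>\<^sup>+gs. ennreal (potential n \<alpha> gs) + ennreal \<delta> \<partial>measure_pmf (traj n k))"
    unfolding traj.simps(2) nn_integral_bind_pmf
  proof (rule nn_integral_mono_AE)
    show "AE gs in measure_pmf (traj n k). (\<integral>\<^sup>+hs. ennreal (potential n \<alpha> hs)
        \<partial>measure_pmf (if triangles (last gs) = {} then return_pmf gs
          else map_pmf (\<lambda>g. gs @ [g]) (removal_step (last gs)))) \<le> ennreal (potential n \<alpha> gs) + ennreal \<delta>"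
      unfolding AE_measure_pmf_iff \<delta>_def using nn_integral_potential_step[OF assms removal_path_traj] by blast
  qed
  also have "\<dots> = (\<integral>\<^sup>+gs. ennreal (potential n \<alpha> gs) \<partial>measure_pmf (traj n k)) + ennreal \<delta>"
    by (subst nn_integral_add) (auto simp: measure_pmf.emeasure_space_1)
  also have "\<dots> \<le> ennreal (real k * \<delta>) + ennreal \<delta>" using Suc.IH unfolding \<delta>_def by (intro add_right_mono)
  also have "\<dots> = ennreal (real k * \<delta> + \<delta>)"
    by (rule ennreal_plus[symmetric]) (auto simp: \<delta>_def)
  also have "real k * \<delta> + \<delta> = real (Suc k) * \<delta>" by (simp add: algebra_simps)
  finally show ?case unfolding \<delta>_def .
qed

section \<open>The number of triangles outside the bad event\<close>

lemma tame_on_path: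
  assumes "large_enough n \<alpha>" "removal_path n gs" "i < length gs" "j < i" "p_min n \<le> pp n i"
    and "\<forall>j<i. \<forall>u<n. \<forall>v<n. u \<noteq> v \<longrightarrow>
      \<bar>real (codeg (gs ! j) u v) - real n * (pp n j)^2\<bar> \<le> \<alpha> * sqrt (real n) * pp n j * Phi (pp n j) n"
  shows "tame n \<alpha> (gs ! j)"
proof -
  have n: "0 < n" using large_enoughD(1)[OF assms(1)] by simp
  have "Suc j < length gs" using assms(3,4) by simp
  then obtain T where "T \<in> triangles (gs ! j)" using assms(2) unfolding removal_path_def by blast
  moreover have dens: "density n (gs ! j) = pp n j"
    using density_removal_path[OF assms(2) _ n] assms(3,4) by simp
  moreover have "p_min n \<le> pp n (Suc j)" using assms(4,5) pp_antimono[of "Suc j" i n] by simp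
  ultimately show ?thesis using assms(4,6)
    by (auto simp: tame_def codeg_concentrated_def codeg_err_def pp_Suc)
qed

lemma tri_ratio_telescope:
  assumes "i < length gs" "\<forall>j<i. tame n \<alpha> (gs ! j)"
  shows "tri_ratio (gs ! i) = tri_ratio (gs ! 0) + mart n \<alpha> (take (Suc i) gs)
    + (\<Sum>j<i. exp_next_tri_ratio (gs ! j) - tri_ratio (gs ! j))"
proof -
  have "mart n \<alpha> (take (Suc i) gs) = (\<Sum>j<i. tri_ratio (gs ! Suc j) - exp_next_tri_ratio (gs ! j))"
    unfolding mart_take[OF assms(1)] using assms(2) by (intro sum.cong) (auto simp: mart_incr_def)
  moreover have "(\<Sum>j<i. tri_ratio (gs ! Suc j) - tri_ratio (gs ! j)) = tri_ratio (gs ! i) - tri_ratio (gs ! 0)"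
    by (rule sum_lessThan_telescope)
  moreover have "(\<Sum>j<i. tri_ratio (gs ! Suc j) - exp_next_tri_ratio (gs ! j))
      + (\<Sum>j<i. exp_next_tri_ratio (gs ! j) - tri_ratio (gs ! j))
      = (\<Sum>j<i. tri_ratio (gs ! Suc j) - tri_ratio (gs ! j))"
    by (simp add: sum.distrib[symmetric])
  ultimately show ?thesis by linarith
qed

lemma real_card_removal_path:
  assumes "removal_path n gs" "j < length gs"
  shows "real (card (gs ! j)) = real (n choose 2) - 3 * real j"
  using removal_path_card[OF assms] by (metis add_diff_cancel_right' of_nat_add of_nat_mult of_nat_numeral)

lemma drift_le_on_path:
  assumes "large_enough n \<alpha>" "\<alpha> > 0" "removal_path n gs" "i < length gs" "p_min n \<le> pp n i"
    and "j < i" "tame n \<alpha> (gs ! j)"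
  shows "\<bar>exp_next_tri_ratio (gs ! j) - tri_ratio (gs ! j)\<bar>
    \<le> (2 + 4 * \<alpha>^2 * (Phi (pp n i) n)^2) / tri_scale (real (n choose 2) - 3 * (real j + 1))"
proof -
  define F where "F = tri_scale (real (n choose 2) - 3 * (real j + 1))"
  have n: "0 < n" "1 < real n" using large_enoughD(1)[OF assms(1)] by auto
  have j: "j < length gs" using assms(4,6) by simp
  have card: "real (card (gs ! j)) - 3 = real (n choose 2) - 3 * (real j + 1)"
    using real_card_removal_path[OF assms(3) j] by simp
  have "30 \<le> real (card (gs ! j)) - 3" using tame_density_ge(2)[OF assms(1,7)] .
  then have F0: "0 < F" using tri_scale_pos card by (simp add: F_def)
  have pi: "0 < pp n i" using p_min_pos[OF assms(1)] assms(5) by simp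
  have "Phi (pp n j) n \<le> Phi (pp n i) n" "0 < Phi (pp n j) n"
    using Phi_antimono[OF pi pp_antimono n(2)] assms(6) pi pp_antimono[of j i n] n(2)
    by (auto simp: Phi_def)
  then have num: "2 + 4 * \<alpha>^2 * (Phi (pp n j) n)^2 \<le> 2 + 4 * \<alpha>^2 * (Phi (pp n i) n)^2"
    by (intro add_left_mono mult_left_mono power_mono) auto
  have "\<bar>exp_next_tri_ratio (gs ! j) - tri_ratio (gs ! j)\<bar> \<le> (2 + 4 * \<alpha>^2 * (Phi (pp n j) n)^2) / F"
    using tame_tri_ratio_drift_le[OF assms(1,2) removal_path_graph_on[OF assms(3) j] assms(7)]
      density_removal_path[OF assms(3) j n(1)] card by (simp add: F_def)
  also have "\<dots> \<le> (2 + 4 * \<alpha>^2 * (Phi (pp n i) n)^2) / F" using num F0 by (intro divide_right_mono) auto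
  finally show ?thesis by (simp add: F_def)
qed

lemma drift_sum_le:
  assumes "large_enough n \<alpha>" "\<alpha> > 0" "removal_path n gs" "i < length gs" "p_min n \<le> pp n i"
    and "\<forall>j<i. tame n \<alpha> (gs ! j)"
  defines "m \<equiv> real (card (gs ! i))"
  shows "tri_scale m * \<bar>\<Sum>j<i. exp_next_tri_ratio (gs ! j) - tri_ratio (gs ! j)\<bar>
    \<le> (2 + 4 * \<alpha>^2 * (Phi (pp n i) n)^2) * m / 6"
proof -
  define N where "N = real (n choose 2)"
  define D where "D = 2 + 4 * \<alpha>^2 * (Phi (pp n i) n)^2"
  have n: "0 < n" using large_enoughD(1)[OF assms(1)] by auto
  have m: "m = N - 3 * real i" using real_card_removal_path[OF assms(3,4)] by (simp add: m_def N_def)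
  have "m = ((real n)^2 * pp n i - real n) / 2"
    using card_eq_density[OF n] density_removal_path[OF assms(3,4) n] by (simp add: m_def)
  then have m30: "30 \<le> m" using edges_at_density_ge[OF assms(1,5)] by simp
  have "\<bar>\<Sum>j<i. exp_next_tri_ratio (gs ! j) - tri_ratio (gs ! j)\<bar>
      \<le> (\<Sum>j<i. \<bar>exp_next_tri_ratio (gs ! j) - tri_ratio (gs ! j)\<bar>)"
    by (rule sum_abs)
  also have "\<dots> \<le> (\<Sum>j<i. D * (1 / tri_scale (N - 3 * (real j + 1))))"
    using drift_le_on_path[OF assms(1-5)] assms(6) by (intro sum_mono) (simp add: D_def N_def)
  finally have "\<bar>\<Sum>j<i. exp_next_tri_ratio (gs ! j) - tri_ratio (gs ! j)\<bar>
      \<le> D * (\<Sum>j<i. 1 / tri_scale (N - 3 * (real j + 1)))"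
    by (simp add: sum_distrib_left)
  then have "tri_scale m * \<bar>\<Sum>j<i. exp_next_tri_ratio (gs ! j) - tri_ratio (gs ! j)\<bar>
      \<le> D * (tri_scale (N - 3 * real i) * (\<Sum>j<i. 1 / tri_scale (N - 3 * (real j + 1))))"
    using tri_scale_pos[of m] m30 m by (simp add: mult_left_mono mult.left_commute)
  also have "\<dots> \<le> D * ((N - 3 * real i) / 6)"
    using tri_scale_inverse_sum_le[of N i] m30 m by (intro mult_left_mono) (auto simp: D_def)
  finally show ?thesis using m by (simp add: D_def)
qed

lemma tri_ratio_complete_graph:
  "tri_ratio (complete_graph n)
    = (real n * (real n - 1) * (real n - 2) / 6) / tri_scale (real n * (real n - 1) / 2)"
proof -
  have c3: "real (n choose 3) = real n * (real n - 1) * (real n - 2) / 6"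
    using real_choose_three[of n] by simp
  have c2: "real (n choose 2) = real n * (real n - 1) / 2"
    using real_choose_two[of n] by simp
  show ?thesis unfolding tri_ratio_def num_triangles_complete_graph card_complete_graph c3 c2 ..
qed

lemma initial_prediction_error:
  assumes "large_enough n \<alpha>" "removal_path n gs" "i < length gs" "p_min n \<le> pp n i"
  shows "\<bar>tri_scale (real (card (gs ! i))) * tri_ratio (gs ! 0) - (real n)^3 * (pp n i)^3 / 6\<bar>
    \<le> 3/2 * ((real n)^2 * pp n i)"
proof -
  define x where "x = real n * pp n i"
  have n: "0 < n" "12 \<le> real n" using large_enoughD(1)[OF assms(1)] by auto
  have dens: "density n (gs ! i) = pp n i" using density_removal_path[OF assms(2,3) n(1)] .
  have x: "2 \<le> x" "x \<le> real n"
    using n_mult_p_ge(1)[OF assms(1,4)] density_le_1[OF removal_path_graph_on[OF assms(2,3)] n(1)] dens n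
    by (simp_all add: x_def mult_left_le)
  have "(real n * x - real n) / 2 = real (card (gs ! i))"
    using card_eq_density[OF n(1)] dens by (simp add: x_def power2_eq_square)
  then have W: "tri_scale (real (card (gs ! i))) * tri_ratio (gs ! 0) = tri_scale ((real n * x - real n) / 2) *
      (real n * (real n - 1) * (real n - 2) / 6) / tri_scale (real n * (real n - 1) / 2)"
    using assms(2) by (simp add: removal_path_def tri_ratio_complete_graph)
  have "(real n)^3 * (pp n i)^3 = x^3" "(real n)^2 * pp n i = real n * x"
    by (simp_all add: x_def power_mult_distrib power2_eq_square)
  then show ?thesis unfolding W using tri_scale_initial_error[OF n(2) x] by (simp add: mult.assoc)
qed

text \<open>Outside the event \<open>mart_exceeds\<close>, the three error terms --- the prediction error at
  time \<open>0\<close>, the martingale and the accumulated drift --- each fit into the allowed error.\<close>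
lemma num_triangles_close:
  assumes "large_enough n \<alpha>" "\<alpha> > 0" "removal_path n gs" "i < length gs" "p_min n \<le> pp n i"
    and "\<forall>j<i. tame n \<alpha> (gs ! j)" "\<not> mart_exceeds n \<alpha> gs"
  shows "\<bar>real (num_triangles (gs ! i)) - (real n)^3 * (pp n i)^3 / 6\<bar>
    \<le> \<alpha>^2 * (real n)^2 * pp n i * (Phi (pp n i) n)^2"
proof -
  define p where "p = pp n i"
  define m where "m = real (card (gs ! i))"
  define M where "M = mart n \<alpha> (take (Suc i) gs)"
  define A where "A = (\<Sum>j<i. exp_next_tri_ratio (gs ! j) - tri_ratio (gs ! j))"
  define K where "K = (real n)^2 * p"
  define Z where "Z = \<alpha>^2 * (Phi p n)^2"
  have n: "0 < n" using large_enoughD(1)[OF assms(1)] by auto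
  have dens: "density n (gs ! i) = p" using density_removal_path[OF assms(3,4) n] by (simp add: p_def)
  have p: "p_min n \<le> p" "p \<le> 1"
    using assms(5) density_le_1[OF removal_path_graph_on[OF assms(3,4)] n] dens by (auto simp: p_def)
  have mK: "m = (K - real n) / 2" using card_eq_density[OF n] dens by (simp add: m_def K_def)
  have F: "0 < tri_scale m" using tri_scale_pos edges_at_density_ge[OF assms(1) p(1)] mK K_def by simp
  have Z12: "12 \<le> Z" using twelve_le_alpha_sq_Phi_sq[OF assms(1) p] by (simp add: Z_def)
  have initial: "\<bar>tri_scale m * tri_ratio (gs ! 0) - (real n)^3 * p^3 / 6\<bar> \<le> 3/2 * K"
    using initial_prediction_error[OF assms(1,3,4) p(1)[unfolded p_def]] by (simp add: m_def K_def p_def)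
  have "\<bar>M\<bar> < mart_bound n \<alpha> p" using assms(4,7) p(1) dens unfolding mart_exceeds_def M_def by auto
  then have mart: "tri_scale m * \<bar>M\<bar> \<le> Z * K / 2"
    using F unfolding mart_bound_def mK[symmetric, unfolded K_def] by (simp add: Z_def K_def field_simps)
  have "tri_scale m * \<bar>A\<bar> \<le> (2 + 4 * Z) * m / 6"
    using drift_sum_le[OF assms(1-6)] by (simp add: A_def m_def Z_def p_def mult.assoc)
  also have "\<dots> \<le> (2 + 4 * Z) * (K / 2) / 6"
    using mK n by (intro divide_right_mono mult_left_mono) (auto simp: Z_def)
  finally have drift: "tri_scale m * \<bar>A\<bar> \<le> (2 + 4 * Z) * (K / 2) / 6" .
  have "real (num_triangles (gs ! i)) = tri_scale m * tri_ratio (gs ! i)"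
    using F by (simp add: tri_ratio_def m_def)
  also have "\<dots> = tri_scale m * tri_ratio (gs ! 0) + tri_scale m * M + tri_scale m * A"
    unfolding tri_ratio_telescope[OF assms(4,6)] by (simp add: M_def A_def algebra_simps)
  finally have "\<bar>real (num_triangles (gs ! i)) - (real n)^3 * p^3 / 6\<bar>
      \<le> \<bar>tri_scale m * tri_ratio (gs ! 0) - (real n)^3 * p^3 / 6\<bar> + tri_scale m * \<bar>M\<bar> + tri_scale m * \<bar>A\<bar>"
    using abs_add3_diff_le[of "tri_scale m * tri_ratio (gs ! 0)" "tri_scale m * M" "tri_scale m * A"] F
    by (simp add: abs_mult)
  also have "\<dots> \<le> 3/2 * K + Z * K / 2 + (2 + 4 * Z) * (K / 2) / 6"
    using initial mart drift by linarith
  also have "\<dots> = K * (5/3 + Z * (5/6))" by (simp add: field_simps)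
  also have "\<dots> \<le> K * Z"
    using Z12 p_min_pos[OF assms(1)] p(1) by (intro mult_left_mono) (auto simp: K_def)
  finally show ?thesis by (simp add: Z_def K_def p_def mult_ac)
qed

lemma good_event_if_not_mart_exceeds:
  assumes "large_enough n \<alpha>" "\<alpha> > 0" "removal_path n gs" "\<not> mart_exceeds n \<alpha> gs"
  shows "good_event n \<alpha> gs"
  unfolding good_event_def
proof (intro allI impI, elim conjE)
  fix i assume i: "i < length gs" and p: "real n powr (-1/2) * (ln (real n))^2 \<le> pp n i"
    and codeg: "\<forall>j<i. \<forall>u<n. \<forall>v<n. u \<noteq> v \<longrightarrow>
      \<bar>real (codeg (gs ! j) u v) - real n * (pp n j)^2\<bar> \<le> \<alpha> * sqrt (real n) * pp n j * Phi (pp n j) n"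
  have "p_min n \<le> pp n i" using p by (simp add: p_min_def)
  moreover from this have "\<forall>j<i. tame n \<alpha> (gs ! j)"
    using tame_on_path[OF assms(1,3) i _ _ codeg] by blast
  ultimately show "\<bar>real (num_triangles (gs ! i)) - (real n)^3 * (pp n i)^3 / 6\<bar>
      \<le> \<alpha>^2 * (real n)^2 * pp n i * (Phi (pp n i) n)^2"
    using num_triangles_close[OF assms(1-3) i] assms(4) by blast
qed

text \<open>Markov's inequality for the potential, which is \<open>1\<close> on \<open>mart_exceeds\<close>.\<close>
lemma prob_good_event_ge:
  assumes "large_enough n \<alpha>" "\<alpha> > 0"
  shows "1 - 144 / (\<alpha>^2 * real n) \<le> measure_pmf.prob (triangle_removal_process n) {gs. good_event n \<alpha> gs}"
proof -
  define P where "P = triangle_removal_process n"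
  define A where "A = {gs. \<not> good_event n \<alpha> gs}"
  have n0: "0 < real n" using large_enoughD(1)[OF assms(1)] by simp
  have "emeasure (measure_pmf P) A = (\<integral>\<^sup>+gs. indicator A gs \<partial>measure_pmf P)" by simp
  also have "\<dots> \<le> (\<integral>\<^sup>+gs. ennreal (potential n \<alpha> gs) \<partial>measure_pmf P)"
  proof (rule nn_integral_mono_AE)
    have "indicator A gs \<le> ennreal (potential n \<alpha> gs)" if "gs \<in> set_pmf P" for gs
      using good_event_if_not_mart_exceeds[OF assms removal_path_traj] that
      by (auto simp: A_def P_def triangle_removal_process_def potential_def indicator_def)
    then show "AE gs in measure_pmf P. indicator A gs \<le> ennreal (potential n \<alpha> gs)"
      by (simp add: AE_measure_pmf_iff)
  qed
  also have "\<dots> \<le> ennreal (real (n^2) * (144 / (\<alpha>^2 * (real n)^3)))"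
    unfolding P_def triangle_removal_process_def by (rule nn_integral_potential_traj_le[OF assms])
  also have "real (n^2) * (144 / (\<alpha>^2 * (real n)^3)) = 144 / (\<alpha>^2 * real n)"
    using n0 by (simp add: field_simps power2_eq_square power3_eq_cube)
  finally have "measure_pmf.prob P A \<le> 144 / (\<alpha>^2 * real n)"
    using n0 assms(2) by (simp add: measure_pmf.emeasure_eq_measure ennreal_le_iff)
  moreover have "measure_pmf.prob P {gs. good_event n \<alpha> gs} = 1 - measure_pmf.prob P A"
    using measure_pmf.prob_compl[of A P] by (simp add: A_def Compl_eq_Diff_UNIV[symmetric] Collect_neg_eq[symmetric])
  ultimately show ?thesis by (simp add: P_def)
qed

theorem theorem2p2:
  fixes \<alpha> :: real
  assumes "\<alpha> > 0"
  shows "(\<lambda>n. measure_pmf.prob (triangle_removal_process n) {gs. good_event n \<alpha> gs})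
           \<longlonglongrightarrow> 1"
proof (rule tendsto_sandwich)
  show "eventually (\<lambda>n. 1 - 144 / (\<alpha>^2 * real n)
      \<le> measure_pmf.prob (triangle_removal_process n) {gs. good_event n \<alpha> gs}) sequentially"
    using eventually_large_enough[OF assms] by eventually_elim (rule prob_good_event_ge[OF _ assms])
  show "eventually (\<lambda>n. measure_pmf.prob (triangle_removal_process n) {gs. good_event n \<alpha> gs} \<le> 1) sequentially"
    by simp
  have "(\<lambda>n. 1 - (144 / \<alpha>^2) / real n) \<longlonglongrightarrow> 1" by real_asymp
  then show "(\<lambda>n. 1 - 144 / (\<alpha>^2 * real n)) \<longlonglongrightarrow> 1" by (simp add: divide_divide_eq_left)
qed simp

end
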